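(* Let $I\subsetneq S$ and $J=\tau(I)$. For any proper subset $X\subsetneq S$, the following are equivalent: (i) $J\subset X$; (ii) $J\subset\mathcal R(w_Ih_X)$. Moreover, in this case: (1) $\ell(w_Ih_X)=\ell(w_I)+\ell(h_X)$; (2) $w_Ih_X=h_Yw_J$ for some uniquely determined $Y\subsetneq S$; (3) $Y$ is obtained from $X$ by conjugation by the longest element within each $\tau$-component, i.e. for each $\tau$-component $A$, either $X\cap A=J\cap A$ and $Y\cap A=I\cap A$, or $X\cap A=A=Y\cap A$; (4) $\mathcal R(w_Ih_X)=J\cup\{x\in X: x-1\notin X\}$; (5) $\mathcal L(h_Yw_J)=I\cup\{y\in Y: y+1\notin Y\}$.
   Context: $(W,S)$ is the affine Weyl group of type $\tilde A_{n-1}$ ($n\ge2$), with $S=\{s_i:i\in\mathbb Z/n\mathbb Z\}$ identified with $\mathbb Z/n\mathbb Z$, and $\tau(s_i)=s_{i+1}$. For $X\subsetneq S$, choose $\aleph\in S\setminus X$, order $S$ as $\aleph<\aleph+1<\dots<\aleph-1$, write $X=\{x_1<\dots<x_d\}$ and set $h_X=s_{x_d}\cdots s_{x_1}$ (independent of the choice of $\aleph$). For $I\subsetneq S$, $w_I$ is the longest element of the finite parabolic subgroup $W_I$. $\mathcal L,\mathcal R$ denote left and right descent sets. The $\tau$-components of $S$ (relative to $I$) are the sets $B\cup\tau(B)$ for $B$ a connected component of $I$ in the affine Dynkin diagram (a cycle), together with the singletons $\{i\}$ for $i\in S\setminus(I\cup J)$; they partition $S$, and a $\tau$-component $A$ is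 characterized by: for $j\in A$, $j+1\in A$ iff $j\in I$, and $j-1\in A$ iff $j\in J$. *)

theory Defs
  imports Main
begin

text \<open>Model of the affine Weyl group of type affine A_(n-1): the group of
affine permutations of the integers generated by the simple reflections
s_i (i in Z/nZ, represented by 0..n-1), where s_i swaps k and k+1 for every
k congruent to i mod n.\<close>

definition Sset :: "nat \<Rightarrow> int set" where
  "Sset n = {0..<int n}"

definition sref :: "nat \<Rightarrow> int \<Rightarrow> int \<Rightarrow> int" where
  "sref n i k = (if k mod int n = i mod int n then k + 1
                 else if k mod int n = (i + 1) mod int n then k - 1 else k)"

definition word_prod :: "nat \<Rightarrow> int list \<Rightarrow> (int \<Rightarrow> int)" where
  "word_prod n ws = foldr (\<lambda>i f. sref n i \<circ> f) ws id"

definition parab :: "nat \<Rightarrow> int set \<Rightarrow> (int \<Rightarrow> int) set" where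
  "parab n I = {word_prod n ws | ws. set ws \<subseteq> I}"

definition len :: "nat \<Rightarrow> (int \<Rightarrow> int) \<Rightarrow> nat" where
  "len n w = (LEAST k. \<exists>ws. length ws = k \<and> set ws \<subseteq> Sset n \<and> word_prod n ws = w)"

definition longest :: "nat \<Rightarrow> int set \<Rightarrow> (int \<Rightarrow> int)" where
  "longest n I = (THE w. w \<in> parab n I \<and> (\<forall>v \<in> parab n I. len n v \<le> len n w))"

definition rdes :: "nat \<Rightarrow> (int \<Rightarrow> int) \<Rightarrow> int set" where
  "rdes n w = {i \<in> Sset n. len n (w \<circ> sref n i) < len n w}"

definition ldes :: "nat \<Rightarrow> (int \<Rightarrow> int) \<Rightarrow> int set" where
  "ldes n w = {i \<in> Sset n. len n (sref n i \<circ> w) < len n w}"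

definition tau :: "nat \<Rightarrow> int \<Rightarrow> int" where
  "tau n i = (i + 1) mod int n"

text \<open>h_X: choose aleph in S - X, order S as aleph < aleph+1 < ... < aleph-1,
list X = {x_1 < ... < x_d} in that order and set h_X = s_{x_d} ... s_{x_1}.\<close>
definition hX :: "nat \<Rightarrow> int set \<Rightarrow> (int \<Rightarrow> int)" where
  "hX n X = (let a = (SOME a. a \<in> Sset n - X);
                 xs = sort_key (\<lambda>x. (x - a) mod int n) (sorted_list_of_set X)
             in word_prod n (rev xs))"

text \<open>tau-components of S relative to I: the sets B \<union> tau(B), B a connected
component (cyclic interval {a,...,a+k-1}) of I, and the singletons {a} with
a not in I \<union> tau(I).\<close>
definition tau_components :: "nat \<Rightarrow> int set \<Rightarrow> int set set" where
  "tau_components n I =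
     {A. \<exists>a k. a \<in> Sset n \<and>
        A = {(a + int j) mod int n | j. j \<le> k} \<and>
        (\<forall>j < k. (a + int j) mod int n \<in> I) \<and>
        (a + int k) mod int n \<notin> I \<and> (a - 1) mod int n \<notin> I}"

end

theory Submission
  imports Defs "HOL-Library.FuncSet"
begin

text \<open>The simple reflections act on \<open>\<int>\<close> as the affine permutations of period \<open>n\<close>, so every
element of \<open>W\<close> is an explicit map \<open>w\<close> with \<open>w (k + n) = w k + n\<close>. In this model \<open>\<ell>(w)\<close> is
the number of inversions \<open>a < b\<close>, \<open>w b < w a\<close> with \<open>a\<close> in a window of length \<open>n\<close>, and
\<open>i \<in> \<R>(w)\<close> iff \<open>w (i + 1) < w i\<close>. Lift \<open>I\<close> to the periodic predicate \<open>p mod n \<in> I\<close>: its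
maximal runs \<open>[b, e)\<close> are the components of \<open>I\<close>, and \<open>w\<^sub>I\<close> reverses each interval \<open>[b, e]\<close>.
Likewise \<open>h\<^sub>X\<close> sends \<open>p\<close> to \<open>p - 1\<close> if \<open>p - 1\<close> lies in (the lift of) \<open>X\<close>, and otherwise to the
end of the run of \<open>X\<close> starting at \<open>p\<close>. The condition \<open>\<tau>(I) \<subseteq> X\<close> says that every run of \<open>I\<close>,
shifted by one, lies inside a run of \<open>X\<close>; then \<open>w\<^sub>I h\<^sub>X = h\<^sub>Y w\<^sub>J\<close> for the set \<open>Y\<close> of points
that lie in \<open>I\<close> or whose \<open>I\<close>-run starts in \<open>X\<close>, and all remaining claims are read off
from the signs of \<open>w (i + 1) - w i\<close> for these piecewise linear maps.\<close>

lemma sref_shift: "sref n i (k + int n * q) = sref n i k + int n * q"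
  unfolding sref_def by auto

lemma mod_neq_mod_Suc: "(n::nat) \<ge> 2 \<Longrightarrow> (x::int) mod int n \<noteq> (x + 1) mod int n"
proof
  assume n: "n \<ge> 2" and "x mod int n = (x + 1) mod int n"
  then have "int n dvd 1" by (metis add_diff_cancel_left' mod_eq_dvd_iff)
  then show False using n by simp
qed

lemma sref_sref: "n \<ge> 2 \<Longrightarrow> sref n i (sref n i k) = k"
proof -
  assume n: "n \<ge> 2"
  have ne: "i mod int n \<noteq> (i + 1) mod int n" using mod_neq_mod_Suc[OF n] .
  consider "k mod int n = i mod int n" | "k mod int n = (i + 1) mod int n"
    | "k mod int n \<noteq> i mod int n" "k mod int n \<noteq> (i + 1) mod int n" by blast
  then show ?thesis
  proof cases
    case 1
    then have "(k + 1) mod int n = (i + 1) mod int n" by (metis mod_add_left_eq)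
    then show ?thesis using 1 ne unfolding sref_def by auto
  next
    case 2
    then have "(k - 1) mod int n = i mod int n" by (metis add_diff_cancel_right' mod_diff_left_eq)
    then show ?thesis using 2 ne unfolding sref_def by auto
  next
    case 3
    then show ?thesis unfolding sref_def by auto
  qed
qed

lemma sref_inj: "n \<ge> 2 \<Longrightarrow> inj (sref n i)"
  by (metis inj_on_inverseI sref_sref)

lemma sref_dist: "\<bar>sref n i k - k\<bar> \<le> 1"
  unfolding sref_def by auto

lemma sref_Sset:
  assumes "0 \<le> i" "i < int n"
  shows "sref n i c = (if c mod int n = i then c + 1 else if c mod int n = (i + 1) mod int n then c - 1 else c)"
  unfolding sref_def using assms by simp

lemma word_prod_Nil [simp]: "word_prod n [] = id"
  unfolding word_prod_def by simp

lemma word_prod_Cons: "word_prod n (i # ws) = sref n i \<circ> word_prod n ws"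
  unfolding word_prod_def by simp

lemma word_prod_append: "word_prod n (xs @ ys) = word_prod n xs \<circ> word_prod n ys"
  by (induction xs) (auto simp: word_prod_Cons)

lemma word_prod_snoc: "word_prod n (xs @ [i]) = word_prod n xs \<circ> sref n i"
  by (simp add: word_prod_append word_prod_Cons)

lemma word_prod_shift: "word_prod n ws (k + int n * q) = word_prod n ws k + int n * q"
  by (induction ws arbitrary: k) (auto simp: word_prod_Cons sref_shift)

lemma word_prod_dist: "\<bar>word_prod n ws k - k\<bar> \<le> int (length ws)"
proof (induction ws)
  case (Cons i ws)
  have "\<bar>sref n i (word_prod n ws k) - word_prod n ws k\<bar> \<le> 1" by (rule sref_dist)
  then show ?case using Cons by (simp add: word_prod_Cons)
qed simp

lemma word_prod_rev_cancel: "n \<ge> 2 \<Longrightarrow> word_prod n (rev ws) (word_prod n ws k) = k"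
  by (induction ws arbitrary: k) (auto simp: word_prod_Cons word_prod_snoc sref_sref)

lemma word_prod_cancel_rev: "n \<ge> 2 \<Longrightarrow> word_prod n ws (word_prod n (rev ws) k) = k"
  using word_prod_rev_cancel[of n "rev ws" k] by simp

definition in_W :: "nat \<Rightarrow> (int \<Rightarrow> int) \<Rightarrow> bool" where
  "in_W n w \<longleftrightarrow> (\<exists>ws. set ws \<subseteq> Sset n \<and> word_prod n ws = w)"

lemma in_W_id: "in_W n id"
  unfolding in_W_def by (rule exI[of _ "[]"]) simp

lemma in_W_word_prod: "set ws \<subseteq> Sset n \<Longrightarrow> in_W n (word_prod n ws)"
  unfolding in_W_def by blast

lemma in_W_comp: "in_W n w \<Longrightarrow> in_W n v \<Longrightarrow> in_W n (w \<circ> v)"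
  unfolding in_W_def by (metis set_append Un_subset_iff word_prod_append)

lemma in_W_comp_sref: "in_W n w \<Longrightarrow> i \<in> Sset n \<Longrightarrow> in_W n (w \<circ> sref n i)"
  using in_W_comp[of n w "word_prod n [i]"] in_W_word_prod[of "[i]" n] by (simp add: word_prod_Cons)

lemma in_W_shift: "in_W n w \<Longrightarrow> w (k + int n * q) = w k + int n * q"
  unfolding in_W_def using word_prod_shift by blast

lemma in_W_shift1: "in_W n w \<Longrightarrow> w (k + int n) = w k + int n"
  using in_W_shift[of n w k 1] by simp

lemma in_W_mod: "in_W n w \<Longrightarrow> w k = w (k mod int n) + int n * (k div int n)"
  using in_W_shift[of n w "k mod int n" "k div int n"] by simp

lemma in_W_inj: "n \<ge> 2 \<Longrightarrow> in_W n w \<Longrightarrow> inj w"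
  unfolding in_W_def by (metis inj_on_inverseI word_prod_rev_cancel)

lemma in_W_neq_Suc: "n \<ge> 2 \<Longrightarrow> in_W n w \<Longrightarrow> w i \<noteq> w (i + 1)"
  using in_W_inj by (metis add_cancel_left_right inj_eq one_neq_zero)

lemma in_W_ascent_mod:
  assumes "in_W n w" shows "w (i mod int n) < w (i mod int n + 1) \<longleftrightarrow> w i < w (i + 1)"
  using in_W_mod[OF assms, of i] in_W_shift[OF assms, of "i mod int n + 1" "i div int n"]
  by (simp add: algebra_simps)

section \<open>Length as the number of inversions\<close>

lemma periodic_shift:
  assumes "\<And>x. f (x + int n) = f x"
  shows "f (x + int n * q) = f x"
proof (induction q rule: int_induct[where k=0])
  case (step1 i)
  have "f (x + int n * (i + 1)) = f ((x + int n * i) + int n)" by (simp add: algebra_simps)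
  then show ?case using step1 assms by simp
next
  case (step2 i)
  have "f (x + int n * i) = f ((x + int n * (i - 1)) + int n)" by (simp add: algebra_simps)
  then show ?case using step2 assms by simp
qed simp

lemma periodic_mod:
  assumes "\<And>x. f (x + int n) = f x"
  shows "f x = f (x mod int n)"
  using periodic_shift[of f n "x mod int n" "x div int n", OF assms] by simp

lemma sum_periodic_window:
  assumes "\<And>x. f (x + int n) = (f x :: 'a::comm_monoid_add)"
  shows "(\<Sum>a\<in>{m..<m + int n}. f a) = (\<Sum>a\<in>{0..<int n}. f a)"
proof -
  have step: "(\<Sum>a\<in>{m+1..<m + 1 + int n}. f a) = (\<Sum>a\<in>{m..<m + int n}. f a)" for m
  proof (cases "n = 0")
    case False
    have "{m..<m + int n} = insert m {m+1..<m + int n}"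
      "{m+1..<m + 1 + int n} = insert (m + int n) {m+1..<m + int n}" using False by auto
    then show ?thesis by (simp add: assms)
  qed simp
  show ?thesis
  proof (induction m rule: int_induct[where k=0])
    case (step2 i) then show ?case using step[of "i - 1"] by simp
  qed (simp_all add: step)
qed

lemma step_mono_gap:
  fixes f :: "int \<Rightarrow> int"
  assumes inc: "\<And>t. a \<le> t \<Longrightarrow> t < b \<Longrightarrow> f t < f (t + 1)" and "a \<le> b"
  shows "f a + (b - a) \<le> f b"
proof -
  have "c \<le> b \<Longrightarrow> f a + (c - a) \<le> f c" if "a \<le> c" for c
    using that
  proof (induction c rule: int_ge_induct)
    case (step c) then show ?case using inc[of c] by simp
  qed simp
  then show ?thesis using assms(2) by simp
qed

definition inv_at :: "(int \<Rightarrow> int) \<Rightarrow> int \<Rightarrow> nat" where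
  "inv_at w a = card {b. a < b \<and> w b < w a}"

definition inv_num :: "nat \<Rightarrow> (int \<Rightarrow> int) \<Rightarrow> nat" where
  "inv_num n w = (\<Sum>a\<in>{0..<int n}. inv_at w a)"

lemma inv_set_finite:
  assumes "in_W n w" shows "finite {b. a < b \<and> w b < w a}"
proof -
  obtain ws where "w = word_prod n ws" using assms unfolding in_W_def by blast
  then have M: "\<bar>w k - k\<bar> \<le> int (length ws)" for k using word_prod_dist by blast
  have "{b. a < b \<and> w b < w a} \<subseteq> {a<..a + 2 * int (length ws)}"
  proof
    fix b assume "b \<in> {b. a < b \<and> w b < w a}"
    then show "b \<in> {a<..a + 2 * int (length ws)}" using M[of a] M[of b] by auto
  qed
  then show ?thesis by (rule finite_subset) simp
qed

lemma inv_at_shift: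
  assumes "in_W n w" shows "inv_at w (a + int n) = inv_at w a"
proof -
  have "{b. a + int n < b \<and> w b < w (a + int n)} = (\<lambda>b. b + int n) ` {b. a < b \<and> w b < w a}"
  proof (rule set_eqI, rule iffI)
    fix b assume "b \<in> {b. a + int n < b \<and> w b < w (a + int n)}"
    then have "b - int n \<in> {b. a < b \<and> w b < w a}"
      using in_W_shift1[OF assms, of "b - int n"] in_W_shift1[OF assms, of a] by auto
    then show "b \<in> (\<lambda>b. b + int n) ` {b. a < b \<and> w b < w a}" by force
  qed (auto simp: in_W_shift1[OF assms])
  then show ?thesis unfolding inv_at_def by (simp add: card_image)
qed

lemma inv_num_window:
  assumes "in_W n w" shows "inv_num n w = (\<Sum>a\<in>{m..<m + int n}. inv_at w a)"
  unfolding inv_num_def using sum_periodic_window[of "inv_at w" n m] inv_at_shift[OF assms] by simp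

lemma inv_at_comp_sref:
  assumes n: "n \<ge> 2"
  shows "inv_at (w \<circ> sref n i) a = card {c. a < sref n i c \<and> w c < w (sref n i a)}"
proof -
  have "{b. a < b \<and> w (sref n i b) < w (sref n i a)} = sref n i ` {c. a < sref n i c \<and> w c < w (sref n i a)}"
  proof (rule set_eqI, rule iffI)
    fix b assume "b \<in> {b. a < b \<and> w (sref n i b) < w (sref n i a)}"
    then show "b \<in> sref n i ` {c. a < sref n i c \<and> w c < w (sref n i a)}"
      using sref_sref[OF n] by (metis (mono_tags, lifting) image_eqI mem_Collect_eq)
  qed (use sref_sref[OF n] in auto)
  then show ?thesis
    unfolding inv_at_def comp_def by (simp add: card_image inj_on_subset[OF sref_inj[OF n]])
qed

lemma window_mod_neq:
  assumes n: "n \<ge> 2" and i: "0 \<le> i" "i < int n" and a: "a \<in> {i+2..<i + int n}"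
  shows "a mod int n \<noteq> i" "a mod int n \<noteq> (i+1) mod int n"
proof -
  obtain d where d: "a = i + d" "2 \<le> d" "d < int n" using a by (intro that[of "a - i"]) auto
  show "a mod int n \<noteq> i"
  proof
    assume "a mod int n = i"
    then have "a mod int n = i mod int n" using i by simp
    then have "int n dvd d" using d by (simp add: mod_eq_dvd_iff)
    then show False using d zdvd_imp_le by fastforce
  qed
  show "a mod int n \<noteq> (i+1) mod int n"
  proof
    assume "a mod int n = (i+1) mod int n"
    then have "int n dvd (d - 1)" using d by (simp add: mod_eq_dvd_iff)
    then show False using d zdvd_imp_le by fastforce
  qed
qed

lemma inv_at_comp_sref_other:
  assumes n: "n \<ge> 2" and i: "0 \<le> i" "i < int n"
    and a: "a mod int n \<noteq> i" "a mod int n \<noteq> (i+1) mod int n"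
  shows "inv_at (w \<circ> sref n i) a = inv_at w a"
proof -
  have sa: "sref n i a = a" using a unfolding sref_Sset[OF i] by simp
  have "a < sref n i c \<longleftrightarrow> a < c" for c
  proof -
    have "a \<noteq> c" if "c mod int n = i" using that a by auto
    moreover have "a \<noteq> c - 1" if "c mod int n = (i + 1) mod int n"
    proof
      assume "a = c - 1"
      then have "a mod int n = ((i + 1) - 1) mod int n" using that by (metis mod_diff_left_eq)
      then show False using a i by simp
    qed
    ultimately show ?thesis unfolding sref_Sset[OF i] by auto
  qed
  then show ?thesis unfolding inv_at_comp_sref[OF n] unfolding sa inv_at_def by simp
qed

lemma inv_at_comp_sref_at:
  assumes n: "n \<ge> 2" and i: "0 \<le> i" "i < int n" and w: "in_W n w"
  shows "inv_at (w \<circ> sref n i) i = (if w i < w (i+1) then 1 else 0) + inv_at w (i+1)"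
proof -
  have ne: "(i+1) mod int n \<noteq> i mod int n" using mod_neq_mod_Suc[OF n, of i] by simp
  have imod: "i mod int n = i" using i by simp
  have si: "sref n i i = i + 1" "sref n i (i+1) = i"
    unfolding sref_Sset[OF i] using imod ne by auto
  have key: "(i < sref n i c) = (i + 1 < c \<or> c = i)" for c
    using sref_dist[of n i c] si by (cases "c \<le> i - 1"; cases "c = i"; cases "c = i + 1"; auto)
  have eq: "{c. i < sref n i c \<and> w c < w (sref n i i)} =
        (if w i < w (i+1) then {i} else {}) \<union> {c. i + 1 < c \<and> w c < w (i+1)}"
    unfolding key si by auto
  show ?thesis unfolding inv_at_comp_sref[OF n] unfolding eq inv_at_def
    using inv_set_finite[OF w, of "i+1"] by (auto simp: card_insert_disjoint)
qed

lemma inv_at_comp_sref_Suc: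
  assumes n: "n \<ge> 2" and i: "0 \<le> i" "i < int n" and w: "in_W n w"
  shows "inv_at (w \<circ> sref n i) (i+1) + (if w (i+1) < w i then 1 else 0) = inv_at w i"
proof -
  have imod: "i mod int n = i" using i by simp
  have si: "sref n i (i+1) = i"
    unfolding sref_Sset[OF i] using imod mod_neq_mod_Suc[OF n, of i] by auto
  have "(i+2) mod int n \<noteq> (i+1) mod int n" using mod_neq_mod_Suc[OF n, of "i+1"] by (simp add: add.assoc)
  then have s2: "sref n i (i+2) \<ge> i + 2" unfolding sref_Sset[OF i] by auto
  have key: "(i + 1 < sref n i c) = (i + 1 < c)" for c
    using sref_dist[of n i c] si s2 by (cases "c \<le> i"; cases "c = i + 1"; cases "c = i + 2"; auto)
  have eq: "{c. i + 1 < sref n i c \<and> w c < w (sref n i (i+1))} = {c. i < c \<and> w c < w i} - {i+1}"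
    unfolding key si by auto
  have fin: "finite {c. i < c \<and> w c < w i}" by (rule inv_set_finite[OF w])
  then have "card {c. i < c \<and> w c < w i} > 0" if "w (i+1) < w i"
    using that card_gt_0_iff by force
  then show ?thesis unfolding inv_at_comp_sref[OF n] unfolding eq inv_at_def using fin
    by (auto simp: card_Diff_singleton)
qed

text \<open>Only the two inversion counts at \<open>i\<close> and \<open>i + 1\<close> in the window starting at \<open>i\<close> change.\<close>

lemma inv_num_comp_sref:
  assumes n: "n \<ge> 2" and i: "0 \<le> i" "i < int n" and w: "in_W n w"
  shows "inv_num n (w \<circ> sref n i) + (if w (i+1) < w i then 1 else 0)
       = inv_num n w + (if w i < w (i+1) then 1 else 0)"
proof -
  have u: "in_W n (w \<circ> sref n i)" using in_W_comp_sref[OF w] i unfolding Sset_def by simp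
  have win: "{i..<i + int n} = insert i (insert (i+1) {i+2..<i + int n})" using n by auto
  have rest: "(\<Sum>a\<in>{i+2..<i + int n}. inv_at (w \<circ> sref n i) a) = (\<Sum>a\<in>{i+2..<i + int n}. inv_at w a)"
    using inv_at_comp_sref_other[OF n i] window_mod_neq[OF n i] by (intro sum.cong) auto
  have "inv_num n (w \<circ> sref n i)
      = inv_at (w \<circ> sref n i) i + inv_at (w \<circ> sref n i) (i+1) + (\<Sum>a\<in>{i+2..<i + int n}. inv_at w a)"
    unfolding inv_num_window[OF u, of i] win using rest by simp
  moreover have "inv_num n w = inv_at w i + inv_at w (i+1) + (\<Sum>a\<in>{i+2..<i + int n}. inv_at w a)"
    unfolding inv_num_window[OF w, of i] win by simp
  ultimately show ?thesis using inv_at_comp_sref_at[OF n i w] inv_at_comp_sref_Suc[OF n i w] by simp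
qed

lemma inv_num_word_prod_le:
  assumes n: "n \<ge> 2" and ws: "set ws \<subseteq> Sset n"
  shows "inv_num n (word_prod n ws) \<le> length ws"
  using ws
proof (induction ws rule: rev_induct)
  case Nil then show ?case by (simp add: inv_num_def inv_at_def)
next
  case (snoc i ws)
  then have i: "0 \<le> i" "i < int n" unfolding Sset_def by auto
  have w: "in_W n (word_prod n ws)" using snoc in_W_word_prod by auto
  have "inv_num n (word_prod n (ws @ [i])) = inv_num n (word_prod n ws \<circ> sref n i)"
    by (simp only: word_prod_snoc)
  then show ?case using snoc inv_num_comp_sref[OF n i w] by (simp split: if_splits)
qed

definition disp_sum :: "nat \<Rightarrow> (int \<Rightarrow> int) \<Rightarrow> int" where
  "disp_sum n w = (\<Sum>a\<in>{0..<int n}. w a - a)"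

lemma disp_sum_window: "in_W n w \<Longrightarrow> disp_sum n w = (\<Sum>a\<in>{m..<m + int n}. w a - a)"
  unfolding disp_sum_def using sum_periodic_window[of "\<lambda>a. w a - a" n m] in_W_shift1[of n w] by simp

lemma sref_window_image:
  assumes n: "n \<ge> 2" and i: "0 \<le> i" "i < int n"
  shows "sref n i ` {i..<i + int n} = {i..<i + int n}"
proof (rule endo_inj_surj)
  show "inj_on (sref n i) {i..<i + int n}" using sref_inj[OF n] by (rule inj_on_subset) simp
  have ne: "(i+1) mod int n \<noteq> i mod int n" using mod_neq_mod_Suc[OF n, of i] by simp
  show "sref n i ` {i..<i + int n} \<subseteq> {i..<i + int n}"
  proof
    fix b assume "b \<in> sref n i ` {i..<i + int n}"
    then obtain a where a: "a \<in> {i..<i + int n}" "b = sref n i a" by blast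
    show "b \<in> {i..<i + int n}"
    proof (cases "a = i \<or> a = i + 1")
      case True then show ?thesis using a n ne i unfolding sref_Sset[OF i] by auto
    next
      case False
      then have "a \<in> {i+2..<i + int n}" using a by auto
      then show ?thesis using a window_mod_neq[OF n i] unfolding sref_Sset[OF i] by auto
    qed
  qed
qed simp

lemma disp_sum_word_prod:
  assumes n: "n \<ge> 2" and ws: "set ws \<subseteq> Sset n"
  shows "disp_sum n (word_prod n ws) = 0"
  using ws
proof (induction ws rule: rev_induct)
  case Nil then show ?case by (simp add: disp_sum_def)
next
  case (snoc i ws)
  then have i: "0 \<le> i" "i < int n" unfolding Sset_def by auto
  let ?w = "word_prod n ws"
  have w: "in_W n ?w" "in_W n (?w \<circ> sref n i)"
    using snoc in_W_word_prod in_W_comp_sref by auto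
  have inj: "inj_on (sref n i) {i..<i + int n}" using sref_inj[OF n] by (rule inj_on_subset) simp
  have "(\<Sum>a\<in>{i..<i + int n}. ?w (sref n i a)) = (\<Sum>a\<in>{i..<i + int n}. ?w a)"
    using sum.reindex[OF inj, of ?w] sref_window_image[OF n i] by simp
  then have "disp_sum n (?w \<circ> sref n i) = disp_sum n ?w"
    unfolding disp_sum_window[OF w(2), of i] disp_sum_window[OF w(1), of i] by (simp add: sum_subtractf)
  then have "disp_sum n (word_prod n (ws @ [i])) = disp_sum n ?w" by (simp only: word_prod_snoc)
  then show ?case using snoc by simp
qed

lemma in_W_disp_sum: "n \<ge> 2 \<Longrightarrow> in_W n w \<Longrightarrow> disp_sum n w = 0"
  unfolding in_W_def using disp_sum_word_prod by blast

text \<open>A translation \<open>a \<mapsto> a + c\<close> has no inversions, and \<open>disp_sum\<close> rules out \<open>c \<noteq> 0\<close>.\<close>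

lemma inv_num_eq_0_imp_id:
  assumes n: "n \<ge> 2" and w: "in_W n w" and z: "inv_num n w = 0"
  shows "w = id"
proof -
  have "inv_at w (a mod int n) = 0" for a using z n unfolding inv_num_def by simp
  then have "inv_at w a = 0" for a using periodic_mod[of "inv_at w" n a] inv_at_shift[OF w] by simp
  then have empty: "{b. a < b \<and> w b < w a} = {}" for a
    using card_0_eq[OF inv_set_finite[OF w, of a]] unfolding inv_at_def by simp
  have inc: "w a < w (a + 1)" for a
  proof -
    have "\<not> w (a + 1) < w a" using empty[of a] by auto
    then show ?thesis using in_W_neq_Suc[OF n w, of a] by linarith
  qed
  have step: "w (a + 1) = w a + 1" for a
  proof (rule ccontr)
    assume "w (a + 1) \<noteq> w a + 1"
    then have "w (a + 1) \<ge> w a + 2" using inc[of a] by simp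
    moreover have "w (a + 1) + (a + int n - (a + 1)) \<le> w (a + int n)"
      using step_mono_gap[of "a + 1" "a + int n" w] inc n by simp
    ultimately show False using in_W_shift1[OF w, of a] by simp
  qed
  have lin: "w a = a + w 0" for a
  proof (induction a rule: int_induct[where k=0])
    case (step2 i) then show ?case using step[of "i - 1"] by simp
  qed (simp_all add: step)
  then have "w a - a = w 0" for a by (metis add_diff_cancel_left')
  then have "disp_sum n w = int n * w 0" unfolding disp_sum_def by simp
  then have "w 0 = 0" using in_W_disp_sum[OF n w] n by simp
  then show ?thesis using lin by (metis add.right_neutral eq_id_iff)
qed

lemma descent_exists:
  assumes n: "n \<ge> 2" and w: "in_W n w" and p: "inv_num n w > 0"
  shows "\<exists>i. 0 \<le> i \<and> i < int n \<and> w (i+1) < w i"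
proof (rule ccontr)
  assume no_descent: "\<not> ?thesis"
  have "w (a mod int n) < w (a mod int n + 1)" for a
  proof -
    have "0 \<le> a mod int n" "a mod int n < int n" using n by simp_all
    then have "\<not> w (a mod int n + 1) < w (a mod int n)" using no_descent by blast
    then show ?thesis using in_W_neq_Suc[OF n w, of "a mod int n"] by linarith
  qed
  then have inc: "w a < w (a + 1)" for a using in_W_ascent_mod[OF w] by blast
  have "inv_at w a = 0" for a
  proof -
    have "w a < w b" if "a < b" for b using step_mono_gap[of a b w] inc that by simp
    then have "{b. a < b \<and> w b < w a} = {}" by force
    then show ?thesis unfolding inv_at_def by (simp only: card.empty)
  qed
  then show False using p unfolding inv_num_def by simp
qed

lemma reduced_word_exists:
  assumes n: "n \<ge> 2"
  shows "in_W n w \<Longrightarrow> \<exists>ws. length ws = inv_num n w \<and> set ws \<subseteq> Sset n \<and> word_prod n ws = w"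
proof (induction "inv_num n w" arbitrary: w)
  case 0
  then have "w = id" using inv_num_eq_0_imp_id[OF n] by simp
  then show ?case using 0 by (intro exI[of _ "[]"]) simp
next
  case (Suc k)
  obtain i where i: "0 \<le> i" "i < int n" "w (i+1) < w i" using descent_exists[OF n Suc(3)] Suc(2) by auto
  have iS: "i \<in> Sset n" unfolding Sset_def using i by simp
  let ?v = "w \<circ> sref n i"
  have "inv_num n ?v = k" using inv_num_comp_sref[OF n i(1,2) Suc(3)] i(3) Suc(2) by simp
  then obtain us where us: "length us = k" "set us \<subseteq> Sset n" "word_prod n us = ?v"
    using Suc(1) in_W_comp_sref[OF Suc(3) iS] by metis
  have "word_prod n (us @ [i]) = w"
    unfolding word_prod_snoc us(3) using sref_sref[OF n] by (simp add: fun_eq_iff)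
  then show ?case using us iS Suc(2) by (intro exI[of _ "us @ [i]"]) auto
qed

lemma len_eq_inv_num:
  assumes n: "n \<ge> 2" and w: "in_W n w"
  shows "len n w = inv_num n w"
  unfolding len_def
proof (rule Least_equality)
  show "\<exists>ws. length ws = inv_num n w \<and> set ws \<subseteq> Sset n \<and> word_prod n ws = w"
    by (rule reduced_word_exists[OF n w])
qed (use inv_num_word_prod_le[OF n] in blast)

lemma len_id:
  assumes "n \<ge> 2" shows "len n id = 0"
proof -
  have "inv_num n id = 0" unfolding inv_num_def inv_at_def by simp
  then show ?thesis using len_eq_inv_num[OF assms in_W_id] by simp
qed

lemma len_comp_sref:
  assumes n: "n \<ge> 2" and w: "in_W n w" and iS: "i \<in> Sset n"
  shows "len n (w \<circ> sref n i) = (if w i < w (i+1) then len n w + 1 else len n w - 1)"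
proof -
  have i: "0 \<le> i" "i < int n" using iS unfolding Sset_def by auto
  show ?thesis
    unfolding len_eq_inv_num[OF n w] len_eq_inv_num[OF n in_W_comp_sref[OF w iS]]
    using inv_num_comp_sref[OF n i w] in_W_neq_Suc[OF n w, of i] by auto
qed

section \<open>Descent sets\<close>

lemma rdes_in_W:
  assumes n: "n \<ge> 2" and w: "in_W n w"
  shows "rdes n w = {i \<in> Sset n. w (i+1) < w i}"
proof -
  have "len n (w \<circ> sref n i) < len n w \<longleftrightarrow> w (i+1) < w i" if iS: "i \<in> Sset n" for i
  proof (cases "w i < w (i+1)")
    case True then show ?thesis using len_comp_sref[OF n w iS] by simp
  next
    case False
    then have desc: "w (i+1) < w i" using in_W_neq_Suc[OF n w, of i] by linarith
    then have "w \<noteq> id" by auto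
    then have "len n w > 0" using inv_num_eq_0_imp_id[OF n w] len_eq_inv_num[OF n w] by auto
    then show ?thesis using len_comp_sref[OF n w iS] desc by simp
  qed
  then show ?thesis unfolding rdes_def by auto
qed

lemma len_word_prod_le: "set ws \<subseteq> Sset n \<Longrightarrow> len n (word_prod n ws) \<le> length ws"
  unfolding len_def by (rule Least_le) blast

lemma len_rev_le:
  assumes n: "n \<ge> 2" and ws: "set ws \<subseteq> Sset n"
  shows "len n (word_prod n (rev ws)) \<le> len n (word_prod n ws)"
proof -
  have w: "in_W n (word_prod n ws)" using ws by (rule in_W_word_prod)
  obtain us where us: "length us = inv_num n (word_prod n ws)" "set us \<subseteq> Sset n"
    "word_prod n us = word_prod n ws"
    using reduced_word_exists[OF n w] by blast
  have "word_prod n (rev us) k = word_prod n (rev ws) k" for k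
    using word_prod_rev_cancel[OF n, of us "word_prod n (rev ws) k"] word_prod_cancel_rev[OF n, of ws k] us(3)
    by simp
  then have "word_prod n (rev us) = word_prod n (rev ws)" by auto
  then show ?thesis
    using len_word_prod_le[of "rev us" n] us len_eq_inv_num[OF n w] by simp
qed

lemma len_rev:
  assumes n: "n \<ge> 2" and ws: "set ws \<subseteq> Sset n"
  shows "len n (word_prod n (rev ws)) = len n (word_prod n ws)"
  using len_rev_le[OF n ws] len_rev_le[OF n, of "rev ws"] ws by simp

lemma ldes_in_W:
  assumes n: "n \<ge> 2" and w: "in_W n w" and g: "\<And>x. w (g x) = x"
  shows "ldes n w = {i \<in> Sset n. g (i+1) < g i}"
proof -
  obtain ws where ws: "set ws \<subseteq> Sset n" "w = word_prod n ws" using w unfolding in_W_def by blast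
  have g_eq: "g = word_prod n (rev ws)"
    using g word_prod_rev_cancel[OF n, of ws] ws(2) by (metis ext)
  have "len n (sref n i \<circ> w) < len n w \<longleftrightarrow> i \<in> rdes n g" if iS: "i \<in> Sset n" for i
  proof -
    have "len n (sref n i \<circ> w) = len n (word_prod n (rev (i # ws)))"
      using len_rev[OF n, of "i # ws"] ws iS by (simp add: word_prod_Cons)
    also have "word_prod n (rev (i # ws)) = g \<circ> sref n i" by (simp add: word_prod_snoc g_eq)
    finally have "len n (sref n i \<circ> w) = len n (g \<circ> sref n i)" .
    then show ?thesis
      unfolding rdes_def using iS len_rev[OF n ws(1)] ws(2) g_eq by simp
  qed
  moreover have "rdes n g = {i \<in> Sset n. g (i+1) < g i}"
    unfolding g_eq using ws(1) by (simp add: in_W_word_prod rdes_in_W[OF n])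
  ultimately show ?thesis unfolding ldes_def by auto
qed

section \<open>Runs of a predicate on the integers\<close>

text \<open>For a maximal run \<open>[b, e)\<close> of \<open>P\<close> (so \<open>\<not> P (b - 1)\<close>, \<open>P\<close> on \<open>[b, e)\<close>, \<open>\<not> P e\<close>) every
\<open>p \<in> [b, e]\<close> has \<open>run_start P p = b\<close> and \<open>run_end P p = e\<close>; the closed interval \<open>[b, e]\<close> is
the orbit of the parabolic subgroup generated by the reflections in the run. Unless
\<open>runs_bounded P\<close>, the \<open>LEAST\<close> in these definitions may be taken over an empty set.\<close>

definition run_start :: "(int \<Rightarrow> bool) \<Rightarrow> int \<Rightarrow> int" where
  "run_start P p = p - int (LEAST l. \<not> P (p - 1 - int l))"

definition run_end :: "(int \<Rightarrow> bool) \<Rightarrow> int \<Rightarrow> int" where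
  "run_end P p = p + int (LEAST r. \<not> P (p + int r))"

definition runs_bounded :: "(int \<Rightarrow> bool) \<Rightarrow> bool" where
  "runs_bounded P \<longleftrightarrow> (\<forall>p. \<exists>r. \<not> P (p + int r)) \<and> (\<forall>p. \<exists>l. \<not> P (p - 1 - int l))"

definition run_rev :: "(int \<Rightarrow> bool) \<Rightarrow> int \<Rightarrow> int" where
  "run_rev P p = run_start P p + run_end P p - p"

definition hmap :: "(int \<Rightarrow> bool) \<Rightarrow> int \<Rightarrow> int" where
  "hmap P p = (if P (p - 1) then p - 1 else run_end P p)"

definition hmap_inv :: "(int \<Rightarrow> bool) \<Rightarrow> int \<Rightarrow> int" where
  "hmap_inv P p = (if P p then p + 1 else run_start P p)"

lemma run_end_eqI:
  assumes "q \<le> c" "\<And>t. q \<le> t \<Longrightarrow> t < c \<Longrightarrow> P t" "\<not> P c"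
  shows "run_end P q = c"
proof -
  have "(LEAST r. \<not> P (q + int r)) = nat (c - q)"
  proof (rule Least_equality)
    show "\<not> P (q + int (nat (c - q)))" using assms by simp
  next
    fix r assume "\<not> P (q + int r)"
    then show "nat (c - q) \<le> r" using assms(2)[of "q + int r"] by fastforce
  qed
  then show ?thesis unfolding run_end_def using assms by simp
qed

lemma run_start_eqI:
  assumes "c \<le> q" "\<And>t. c \<le> t \<Longrightarrow> t < q \<Longrightarrow> P t" "\<not> P (c - 1)"
  shows "run_start P q = c"
proof -
  have "(LEAST l. \<not> P (q - 1 - int l)) = nat (q - c)"
  proof (rule Least_equality)
    show "\<not> P (q - 1 - int (nat (q - c)))" using assms by simp
  next
    fix l assume "\<not> P (q - 1 - int l)"
    then show "nat (q - c) \<le> l" using assms(2)[of "q - 1 - int l"] by fastforce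
  qed
  then show ?thesis unfolding run_start_def using assms by simp
qed

lemma run_end_ge: "p \<le> run_end P p" unfolding run_end_def by simp

lemma run_start_le: "run_start P p \<le> p" unfolding run_start_def by simp

lemma run_end_le: "\<not> P c \<Longrightarrow> p \<le> c \<Longrightarrow> run_end P p \<le> c"
  unfolding run_end_def using Least_le[of "\<lambda>r. \<not> P (p + int r)" "nat (c - p)"] by simp

lemma run_start_ge: "\<not> P (c - 1) \<Longrightarrow> c \<le> p \<Longrightarrow> c \<le> run_start P p"
  unfolding run_start_def using Least_le[of "\<lambda>l. \<not> P (p - 1 - int l)" "nat (p - c)"] by simp

lemma not_at_run_end: "runs_bounded P \<Longrightarrow> \<not> P (run_end P p)"
  unfolding run_end_def runs_bounded_def by (metis (mono_tags, lifting) LeastI)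

lemma not_before_run_start: "runs_bounded P \<Longrightarrow> \<not> P (run_start P p - 1)"
proof -
  assume "runs_bounded P"
  then obtain l where "\<not> P (p - 1 - int l)" unfolding runs_bounded_def by blast
  then have "\<not> P (p - 1 - int (LEAST l. \<not> P (p - 1 - int l)))" by (rule LeastI)
  then show ?thesis unfolding run_start_def by (simp add: algebra_simps)
qed

lemma in_run_right: "p \<le> t \<Longrightarrow> t < run_end P p \<Longrightarrow> P t"
  using run_end_le[of P t p] by force

lemma in_run_left: "run_start P p \<le> t \<Longrightarrow> t < p \<Longrightarrow> P t"
  using run_start_ge[of P "t+1" p] by force

lemma in_run:
  assumes "run_start P p \<le> t" "t < run_end P p" shows "P t"
  using assms in_run_left[of P p t] in_run_right[of p t P] by (cases "t < p") auto

lemma same_run: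
  assumes g: "runs_bounded P" and q: "run_start P p \<le> q" "q \<le> run_end P p"
  shows "run_start P q = run_start P p" "run_end P q = run_end P p"
proof -
  show "run_end P q = run_end P p"
  proof (rule run_end_eqI)
    show "\<not> P (run_end P p)" by (rule not_at_run_end[OF g])
    show "P t" if "q \<le> t" "t < run_end P p" for t using in_run[of P p t] q that by simp
  qed (use q in auto)
  show "run_start P q = run_start P p"
  proof (rule run_start_eqI)
    show "\<not> P (run_start P p - 1)" by (rule not_before_run_start[OF g])
    show "P t" if "run_start P p \<le> t" "t < q" for t using in_run[of P p t] q that by simp
  qed (use q in auto)
qed

lemma run_start_mono:
  assumes g: "runs_bounded P" and "p \<le> q" shows "run_start P p \<le> run_start P q"
proof (cases "run_start P q \<le> p")
  case True
  then have "run_start P p = run_start P q" using same_run[OF g, of q p] run_end_ge[of q P] assms(2) by (meson order_trans)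
  then show ?thesis by simp
next
  case False then show ?thesis using run_start_le[of P p] by simp
qed

lemma run_start_le_if_run:
  assumes g: "runs_bounded P" and "c \<le> q" and h: "\<And>t. c \<le> t \<Longrightarrow> t < q \<Longrightarrow> P t"
  shows "run_start P q \<le> c"
proof (rule ccontr)
  assume "\<not> run_start P q \<le> c"
  then have "P (run_start P q - 1)" using h[of "run_start P q - 1"] run_start_le[of P q] by simp
  then show False using not_before_run_start[OF g] by blast
qed

lemma run_end_run_start:
  assumes g: "runs_bounded P" shows "run_end P (run_start P q) = run_end P q"
  using same_run(2)[OF g, of q "run_start P q"] run_start_le[of P q] run_end_ge[of q P] by simp

lemma run_end_self: "\<not> P p \<Longrightarrow> run_end P p = p"
  by (rule run_end_eqI) auto

lemma run_start_self: "\<not> P (p - 1) \<Longrightarrow> run_start P p = p"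
  by (rule run_start_eqI) auto

lemma run_end_Suc: "runs_bounded P \<Longrightarrow> P p \<Longrightarrow> run_end P p = run_end P (p + 1)"
proof -
  assume g: "runs_bounded P" and p: "P p"
  show ?thesis
  proof (rule run_end_eqI)
    show "p \<le> run_end P (p + 1)" using run_end_ge[of "p+1" P] by simp
    show "\<not> P (run_end P (p + 1))" by (rule not_at_run_end[OF g])
    fix t assume "p \<le> t" "t < run_end P (p + 1)"
    then show "P t" using p in_run_right[of "p+1" t P] by (cases "t = p") auto
  qed
qed

lemma run_rev_bounds: "run_start P p \<le> run_rev P p" "run_rev P p \<le> run_end P p"
  unfolding run_rev_def using run_start_le[of P p] run_end_ge[of p P] by auto

lemma run_rev_le_notin: "\<not> P p \<Longrightarrow> run_rev P p \<le> p"
  using run_rev_bounds(2)[of P p] run_end_self[of P p] by simp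

lemma run_rev_ge_start: "\<not> P (p - 1) \<Longrightarrow> p \<le> run_rev P p"
  using run_rev_bounds(1)[of P p] run_start_self[of P p] by simp

lemma run_rev_run_rev:
  assumes g: "runs_bounded P" shows "run_rev P (run_rev P p) = p"
proof -
  have "run_start P (run_rev P p) = run_start P p" "run_end P (run_rev P p) = run_end P p" using same_run[OF g, of p "run_rev P p"] run_rev_bounds[of P p] by auto
  then show ?thesis unfolding run_rev_def by simp
qed

lemma run_rev_Suc_in:
  assumes g: "runs_bounded P" and "P p" shows "run_rev P (p+1) = run_rev P p - 1"
proof -
  have e: "run_end P (p+1) = run_end P p" using run_end_Suc[of P p, OF g assms(2)] by simp
  have "p + 1 \<le> run_end P p"
    using not_at_run_end[OF g, of p] run_end_ge[of p P] assms(2) by (metis add1_zle_eq order_le_less)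
  then have "run_start P (p+1) = run_start P p" using same_run(1)[OF g, of p "p+1"] run_start_le[of P p] by simp
  then show ?thesis unfolding run_rev_def e by simp
qed

lemma run_rev_Suc_notin:
  assumes g: "runs_bounded P" and "\<not> P p" shows "run_rev P p < run_rev P (p+1)"
proof -
  have "run_rev P p \<le> p" using run_rev_bounds(2)[of P p] run_end_self[of P p, OF assms(2)] by simp
  moreover have "run_start P (p+1) = p + 1" using run_start_self[of P "p+1"] assms(2) by simp
  ultimately show ?thesis using run_rev_bounds(1)[of P "p+1"] by simp
qed

lemma run_rev_descent_iff:
  assumes g: "runs_bounded P" shows "run_rev P (p+1) < run_rev P p \<longleftrightarrow> P p"
  using run_rev_Suc_in[OF g, of p] run_rev_Suc_notin[OF g, of p] by (cases "P p") auto

lemma run_rev_shift: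
  assumes "\<And>p. Q p \<longleftrightarrow> P (p - 1)"
  shows "run_rev Q p = run_rev P (p - 1) + 1"
proof -
  have Q: "Q = (\<lambda>p. P (p - 1))" using assms by auto
  show ?thesis unfolding Q run_rev_def run_start_def run_end_def by (simp add: algebra_simps)
qed

lemma hmap_hmap_inv:
  assumes g: "runs_bounded P" shows "hmap P (hmap_inv P p) = p"
proof (cases "P p")
  case True then show ?thesis unfolding hmap_def hmap_inv_def by simp
next
  case False
  have "run_end P (run_start P p) = p"
    by (rule run_end_eqI) (auto simp: run_start_le in_run_left False)
  then show ?thesis unfolding hmap_def hmap_inv_def using False not_before_run_start[OF g, of p] by simp
qed

lemma hmap_Suc_eq_iff:
  shows "hmap P (y+1) = y \<longleftrightarrow> P y"
  unfolding hmap_def using run_end_ge[of "y+1" P] by auto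

section \<open>Periodic lifts of subsets of \<open>S\<close>\<close>

definition mem_mod :: "nat \<Rightarrow> int set \<Rightarrow> int \<Rightarrow> bool" where
  "mem_mod n X p \<longleftrightarrow> p mod int n \<in> X"

lemma mem_mod_shift: "mem_mod n X (p + int n * q) = mem_mod n X p"
  unfolding mem_mod_def by simp

lemma mem_mod_shift1: "mem_mod n X (p + int n) = mem_mod n X p"
  using mem_mod_shift[of n X p 1] by simp

lemma mem_mod_Sset: "x \<in> Sset n \<Longrightarrow> mem_mod n X x \<longleftrightarrow> x \<in> X"
  unfolding mem_mod_def Sset_def by simp

lemma runs_bounded_mem_mod:
  assumes n: "n > 0" and a: "0 \<le> a" "a < int n" "a \<notin> X"
  shows "runs_bounded (mem_mod n X)"
  unfolding runs_bounded_def
proof (intro conjI allI)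
  fix p
  have "(p + int (nat ((a - p) mod int n))) mod int n = a"
    using n a by (simp add: mod_add_right_eq)
  then show "\<exists>r. \<not> mem_mod n X (p + int r)" unfolding mem_mod_def using a by metis
next
  fix p
  have "(p - 1 - int (nat ((p - 1 - a) mod int n))) mod int n = a"
    using n a by (simp add: mod_diff_right_eq)
  then show "\<exists>l. \<not> mem_mod n X (p - 1 - int l)" unfolding mem_mod_def using a by metis
qed

lemma runs_bounded_proper:
  assumes n: "n \<ge> 2" and X: "X \<subseteq> Sset n" "X \<noteq> Sset n"
  shows "runs_bounded (mem_mod n X)"
proof -
  obtain a where "a \<in> Sset n" "a \<notin> X" using X by blast
  then show ?thesis using runs_bounded_mem_mod[of n a X] n unfolding Sset_def by auto
qed

lemma run_end_bound:
  assumes n: "n > 0" and a: "0 \<le> a" "a < int n" "a \<notin> X"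
  shows "run_end (mem_mod n X) p < p + int n"
proof -
  have "(p + (a - p) mod int n) mod int n = a"
    using n a by (simp add: mod_add_right_eq)
  then have "\<not> mem_mod n X (p + (a - p) mod int n)" unfolding mem_mod_def using a by simp
  then have "run_end (mem_mod n X) p \<le> p + (a - p) mod int n" by (rule run_end_le) (use n in simp)
  then show ?thesis using n by (smt (verit) pos_mod_bound of_nat_0_less_iff)
qed

lemma run_start_bound:
  assumes n: "n > 0" and a: "0 \<le> a" "a < int n" "a \<notin> X"
  shows "p - int n < run_start (mem_mod n X) p"
proof -
  have e: "p - (p - 1 - a) mod int n - 1 = (p - 1) - (p - 1 - a) mod int n" by simp
  have "((p - 1) - (p - 1 - a) mod int n) mod int n = ((p - 1) - (p - 1 - a)) mod int n"
    by (rule mod_diff_right_eq)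
  then have "(p - (p - 1 - a) mod int n - 1) mod int n = a"
    unfolding e using n a by simp
  then have "\<not> mem_mod n X (p - (p - 1 - a) mod int n - 1)" unfolding mem_mod_def using a by simp
  then have "p - (p - 1 - a) mod int n \<le> run_start (mem_mod n X) p" by (rule run_start_ge) (use n in simp)
  then show ?thesis using n by (smt (verit) pos_mod_bound of_nat_0_less_iff)
qed

lemma run_start_shift:
  assumes per: "\<And>x. P (x + int n) = P x" and g: "runs_bounded P"
  shows "run_start P (p + int n) = run_start P p + int n"
proof (rule run_start_eqI)
  show "run_start P p + int n \<le> p + int n" using run_start_le[of P p] by simp
  have "\<not> P (run_start P p - 1)" using not_before_run_start[OF g] by simp
  then show "\<not> P (run_start P p + int n - 1)" using per[of "run_start P p - 1"] by (simp add: algebra_simps)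
  fix t assume "run_start P p + int n \<le> t" "t < p + int n"
  then have "P (t - int n)" using in_run_left[of P p "t - int n"] by simp
  then show "P t" using per[of "t - int n"] by simp
qed

lemma mem_mod_tau:
  assumes I: "I \<subseteq> Sset n" and n: "n > 0"
  shows "mem_mod n (tau n ` I) p \<longleftrightarrow> mem_mod n I (p - 1)"
proof
  assume "mem_mod n (tau n ` I) p"
  then obtain i where i: "i \<in> I" "p mod int n = (i + 1) mod int n" unfolding mem_mod_def tau_def by auto
  have "i mod int n = i" using i(1) I unfolding Sset_def by auto
  moreover have "(p - 1) mod int n = ((i + 1) - 1) mod int n" using i(2) by (metis mod_diff_left_eq)
  ultimately show "mem_mod n I (p - 1)" unfolding mem_mod_def using i(1) by simp
next
  assume "mem_mod n I (p - 1)"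
  then have "(p - 1) mod int n \<in> I" unfolding mem_mod_def .
  moreover have "tau n ((p - 1) mod int n) = p mod int n" unfolding tau_def by (simp add: mod_add_left_eq)
  ultimately show "mem_mod n (tau n ` I) p" unfolding mem_mod_def by (metis image_eqI)
qed

lemma hmap_empty: "hmap (mem_mod n {}) = id"
proof
  fix p
  have "mem_mod n {} = (\<lambda>_. False)" unfolding mem_mod_def by auto
  then show "hmap (mem_mod n {}) p = id p" unfolding hmap_def using run_end_self[of "mem_mod n {}" p] by simp
qed

lemma run_rev_empty: "run_rev (mem_mod n {}) = id"
proof
  fix p
  have e: "mem_mod n {} = (\<lambda>_. False)" unfolding mem_mod_def by auto
  show "run_rev (mem_mod n {}) p = id p" unfolding run_rev_def e using run_start_self[of "\<lambda>_. False" p] run_end_self[of "\<lambda>_. False" p] by simp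
qed

section \<open>\<open>h\<^sub>X\<close> as an explicit map\<close>

fun pred_not_later :: "nat \<Rightarrow> int list \<Rightarrow> bool" where
  "pred_not_later n [] = True"
| "pred_not_later n (y # zs) = (y \<notin> set zs \<and> (y - 1) mod int n \<notin> set zs \<and> pred_not_later n zs)"

text \<open>Adding the residue class of \<open>y\<close> to \<open>P\<close> does not change run ends off that class, because
a run of \<open>P\<close> can only end on it by passing through the class of \<open>y - 1\<close>.\<close>

lemma run_end_insert_class:
  assumes Q: "\<And>t. Q t \<longleftrightarrow> P t \<or> t mod int n = y"
    and notP: "\<And>t. t mod int n = (y - 1) mod int n \<Longrightarrow> \<not> P t"
    and g: "runs_bounded P" and p: "p mod int n \<noteq> y"
  shows "run_end Q p = run_end P p"
proof (rule run_end_eqI)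
  show "p \<le> run_end P p" by (rule run_end_ge)
  show "Q t" if "p \<le> t" "t < run_end P p" for t
    using Q in_run_right[OF that] by blast
  let ?c = "run_end P p"
  show "\<not> Q ?c"
  proof
    assume "Q ?c"
    then have cm: "?c mod int n = y" using Q not_at_run_end[OF g] by auto
    then have "p < ?c" using p run_end_ge[of p P] by (metis order_le_less)
    then have "P (?c - 1)" using in_run_right[of p "?c - 1" P] by simp
    moreover have "(?c - 1) mod int n = (y - 1) mod int n" using cm by (metis mod_diff_left_eq)
    ultimately show False using notP by blast
  qed
qed

lemma hmap_comp_sref:
  assumes n: "n \<ge> 2" and y: "y \<in> Sset n" and Z: "insert y Z \<subseteq> Sset n" "insert y Z \<noteq> Sset n"
    and yZ: "y \<notin> Z" "(y - 1) mod int n \<notin> Z"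
  shows "hmap (mem_mod n Z) \<circ> sref n y = hmap (mem_mod n (insert y Z))"
proof
  fix p
  let ?P = "mem_mod n Z" and ?Q = "mem_mod n (insert y Z)"
  have gP: "runs_bounded ?P" using runs_bounded_proper[OF n, of Z] Z by auto
  have gQ: "runs_bounded ?Q" using runs_bounded_proper[OF n] Z by auto
  have yr: "0 \<le> y" "y < int n" using y unfolding Sset_def by auto
  have Q: "?Q t \<longleftrightarrow> ?P t \<or> t mod int n = y" for t unfolding mem_mod_def by auto
  have Py: "t mod int n = y \<Longrightarrow> \<not> ?P t" for t unfolding mem_mod_def using yZ by simp
  have Py1: "t mod int n = (y - 1) mod int n \<Longrightarrow> \<not> ?P t" for t unfolding mem_mod_def using yZ by simp
  have pred_mod: "(t - 1) mod int n = (s - 1) mod int n" if "t mod int n = s mod int n" for t s :: int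
    using that by (metis mod_diff_left_eq)
  have y_pred: "(y - 1) mod int n \<noteq> y" using mod_neq_mod_Suc[OF n, of "y - 1"] yr by simp
  have y_succ: "(y + 1) mod int n \<noteq> y" using mod_neq_mod_Suc[OF n, of y] yr by simp
  consider (at) "p mod int n = y" | (after) "p mod int n = (y + 1) mod int n"
    | (other) "p mod int n \<noteq> y" "p mod int n \<noteq> (y + 1) mod int n" by blast
  then show "(hmap ?P \<circ> sref n y) p = hmap ?Q p"
  proof cases
    case at
    have "(p - 1) mod int n = (y - 1) mod int n" using pred_mod[of p y] at yr by simp
    then have "\<not> ?Q (p - 1)" using Q Py1 y_pred by simp
    then have "hmap ?Q p = run_end ?Q (p + 1)"
      unfolding hmap_def using run_end_Suc[OF gQ, of p] Q at by simp
    also have "\<dots> = run_end ?P (p + 1)"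
      using run_end_insert_class[OF Q Py1 gP] mod_neq_mod_Suc[OF n, of p] at by simp
    also have "\<dots> = hmap ?P (p + 1)" unfolding hmap_def using Py[OF at] by simp
    finally show ?thesis using at unfolding sref_Sset[OF yr] by simp
  next
    case after
    have pm1: "(p - 1) mod int n = y" using pred_mod[of p "y + 1"] after yr by simp
    have "(p - 1 - 1) mod int n = (y - 1) mod int n" using pred_mod[of "p - 1" y] pm1 yr by simp
    then have "hmap ?P (p - 1) = p - 1"
      unfolding hmap_def using Py1 run_end_self[of ?P "p - 1"] Py[OF pm1] by simp
    moreover have "hmap ?Q p = p - 1" unfolding hmap_def using Q pm1 by simp
    ultimately show ?thesis using after y_succ unfolding sref_Sset[OF yr] by simp
  next
    case other
    have "(p - 1) mod int n \<noteq> y"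
    proof
      assume "(p - 1) mod int n = y"
      then have "(p - 1 + 1) mod int n = (y + 1) mod int n" by (metis mod_add_left_eq yr mod_pos_pos_trivial)
      then show False using other by simp
    qed
    then have "?Q (p - 1) \<longleftrightarrow> ?P (p - 1)" using Q by simp
    then have "hmap ?P p = hmap ?Q p"
      unfolding hmap_def using run_end_insert_class[OF Q Py1 gP other(1)] by simp
    then show ?thesis using other unfolding sref_Sset[OF yr] by simp
  qed
qed

lemma word_prod_rev_hmap:
  assumes n: "n \<ge> 2"
  shows "set ys \<subseteq> Sset n \<Longrightarrow> set ys \<noteq> Sset n \<Longrightarrow> pred_not_later n ys \<Longrightarrow> word_prod n (rev ys) = hmap (mem_mod n (set ys))"
proof (induction ys)
  case Nil then show ?case using hmap_empty by simp
next
  case (Cons y zs)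
  have zs: "set zs \<subseteq> Sset n" "set zs \<noteq> Sset n" "pred_not_later n zs" using Cons.prems by auto
  have "word_prod n (rev (y # zs)) = word_prod n (rev zs) \<circ> sref n y" by (simp add: word_prod_snoc)
  also have "\<dots> = hmap (mem_mod n (set zs)) \<circ> sref n y" using Cons.IH[OF zs] by simp
  also have "\<dots> = hmap (mem_mod n (insert y (set zs)))"
    by (rule hmap_comp_sref[OF n]) (use Cons.prems in auto)
  finally show ?case by simp
qed

lemma cyclic_key_pred:
  assumes n: "n > 0" and y: "0 \<le> y" "y < int n" and a: "0 \<le> a" "a < int n" "y \<noteq> a"
  shows "(((y - 1) mod int n) - a) mod int n = (y - a) mod int n - 1"
proof -
  have r: "(y - a) mod int n \<ge> 1"
  proof -
    have "(y - a) mod int n \<noteq> 0"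
    proof
      assume "(y - a) mod int n = 0"
      then have "int n dvd (y - a)" by (simp add: mod_eq_0_iff_dvd)
      moreover have "y - a \<noteq> 0" using a by simp
      ultimately have "\<bar>int n\<bar> \<le> \<bar>y - a\<bar>" using dvd_imp_le_int by blast
      then show False using y a by simp
    qed
    then show ?thesis using n by (smt (verit) pos_mod_sign of_nat_0_less_iff)
  qed
  have "(((y - 1) mod int n) - a) mod int n = ((y - 1) - a) mod int n" by (simp add: mod_diff_left_eq)
  also have "(y - 1) - a = (y - a) - 1" by simp
  also have "((y - a) - 1) mod int n = ((y - a) mod int n - 1) mod int n" by (simp add: mod_diff_left_eq)
  also have "\<dots> = (y - a) mod int n - 1" using r n by (smt (verit) pos_mod_bound mod_pos_pos_trivial of_nat_0_less_iff)
  finally show ?thesis .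
qed

lemma pred_not_later_if_sorted:
  assumes n: "n > 0" and a: "0 \<le> a" "a < int n"
  shows "set ys \<subseteq> Sset n - {a} \<Longrightarrow> distinct ys \<Longrightarrow> sorted (map (\<lambda>x. (x - a) mod int n) ys) \<Longrightarrow> pred_not_later n ys"
proof (induction ys)
  case Nil then show ?case by simp
next
  case (Cons y zs)
  have y: "0 \<le> y" "y < int n" "y \<noteq> a" using Cons.prems(1) unfolding Sset_def by auto
  have "(y - 1) mod int n \<notin> set zs"
  proof
    assume z: "(y - 1) mod int n \<in> set zs"
    then have "(y - a) mod int n \<le> (((y - 1) mod int n) - a) mod int n" using Cons.prems(3) by simp
    then show False using cyclic_key_pred[OF n y(1,2) a y(3)] by simp
  qed
  then show ?case using Cons by auto
qed

lemma hX_word: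
  assumes n: "n \<ge> 2" and X: "X \<subseteq> Sset n" "X \<noteq> Sset n"
  shows "\<exists>xs a. a \<in> Sset n \<and> a \<notin> X \<and> set xs = X \<and> distinct xs \<and> sorted (map (\<lambda>x. (x - a) mod int n) xs)
           \<and> hX n X = word_prod n (rev xs)"
proof -
  define a where "a = (SOME a. a \<in> Sset n - X)"
  have "\<exists>a. a \<in> Sset n - X" using X by blast
  then have aS: "a \<in> Sset n - X" unfolding a_def by (rule someI_ex)
  define xs where "xs = sort_key (\<lambda>x. (x - a) mod int n) (sorted_list_of_set X)"
  have fin: "finite X" using X(1) finite_subset unfolding Sset_def by auto
  have "set xs = X" unfolding xs_def using fin by simp
  moreover have "distinct xs" unfolding xs_def using fin by simp
  moreover have "sorted (map (\<lambda>x. (x - a) mod int n) xs)" unfolding xs_def by simp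
  moreover have "hX n X = word_prod n (rev xs)" unfolding hX_def a_def xs_def Let_def by simp
  ultimately show ?thesis using aS by blast
qed

lemma hX_eq_hmap:
  assumes n: "n \<ge> 2" and X: "X \<subseteq> Sset n" "X \<noteq> Sset n"
  shows "hX n X = hmap (mem_mod n X)"
proof -
  obtain xs a where xs: "a \<in> Sset n" "a \<notin> X" "set xs = X" "distinct xs" "sorted (map (\<lambda>x. (x - a) mod int n) xs)"
    "hX n X = word_prod n (rev xs)" using hX_word[OF n X] by blast
  have ar: "0 \<le> a" "a < int n" using xs(1) unfolding Sset_def by auto
  have "pred_not_later n xs" by (rule pred_not_later_if_sorted[of n a]) (use n ar xs X in auto)
  then show ?thesis using word_prod_rev_hmap[OF n, of xs] xs X by simp
qed

section \<open>\<open>w\<^sub>I\<close> as run reversal\<close>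

lemma parab_in_W: "I \<subseteq> Sset n \<Longrightarrow> v \<in> parab n I \<Longrightarrow> in_W n v"
  unfolding parab_def in_W_def by blast

lemma run_start_sref:
  assumes n: "n \<ge> 2" and I: "I \<subseteq> Sset n" "I \<noteq> Sset n" and i: "i \<in> I"
  shows "run_start (mem_mod n I) (sref n i q) = run_start (mem_mod n I) q"
proof -
  let ?P = "mem_mod n I"
  have g: "runs_bounded ?P" by (rule runs_bounded_proper[OF n I])
  have ir: "0 \<le> i" "i < int n" using i I unfolding Sset_def by auto
  show ?thesis
  proof (cases "q mod int n = i")
    case True
    then have s: "sref n i q = q + 1" unfolding sref_Sset[OF ir] by simp
    have "?P q" unfolding mem_mod_def using True i by simp
    then have "q + 1 \<le> run_end ?P q" using not_at_run_end[OF g, of q] run_end_ge[of q ?P] by (metis add1_zle_eq order_le_less)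
    then show ?thesis unfolding s using same_run(1)[OF g, of q "q+1"] run_start_le[of ?P q] by simp
  next
    case F: False
    show ?thesis
    proof (cases "q mod int n = (i + 1) mod int n")
      case True
      then have s: "sref n i q = q - 1" unfolding sref_Sset[OF ir] using F by simp
      have "(q - 1) mod int n = ((i + 1) - 1) mod int n" using True by (metis mod_diff_left_eq)
      then have "?P (q - 1)" unfolding mem_mod_def using i ir by simp
      then have "run_end ?P (q - 1) \<noteq> q - 1" using not_at_run_end[OF g, of "q-1"] by metis
      then have "q \<le> run_end ?P (q - 1)" using run_end_ge[of "q-1" ?P] by simp
      then show ?thesis unfolding s using same_run(1)[OF g, of "q-1" q] run_start_le[of ?P "q-1"] by simp
    next
      case False
      then have s: "sref n i q = q" unfolding sref_Sset[OF ir] using F by simp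
      show ?thesis unfolding s ..
    qed
  qed
qed

lemma run_start_parab:
  assumes n: "n \<ge> 2" and I: "I \<subseteq> Sset n" "I \<noteq> Sset n"
  shows "set ws \<subseteq> I \<Longrightarrow> run_start (mem_mod n I) (word_prod n ws p) = run_start (mem_mod n I) p"
  by (induction ws) (auto simp: word_prod_Cons run_start_sref[OF n I])

lemma parab_run_bounds:
  assumes n: "n \<ge> 2" and I: "I \<subseteq> Sset n" "I \<noteq> Sset n" and v: "v \<in> parab n I"
  shows "run_start (mem_mod n I) (v p) = run_start (mem_mod n I) p" "run_end (mem_mod n I) (v p) = run_end (mem_mod n I) p"
    "run_start (mem_mod n I) p \<le> v p" "v p \<le> run_end (mem_mod n I) p"
proof -
  let ?P = "mem_mod n I"
  have g: "runs_bounded ?P" by (rule runs_bounded_proper[OF n I])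
  obtain ws where ws: "set ws \<subseteq> I" "v = word_prod n ws" using v unfolding parab_def by blast
  show b: "run_start ?P (v p) = run_start ?P p" using run_start_parab[OF n I ws(1)] ws(2) by simp
  show e: "run_end ?P (v p) = run_end ?P p" using run_end_run_start[OF g, of "v p"] b run_end_run_start[OF g, of p] by simp
  show "run_start ?P p \<le> v p" using b run_start_le[of ?P "v p"] by simp
  show "v p \<le> run_end ?P p" using e run_end_ge[of "v p" ?P] by simp
qed

lemma parab_finite:
  assumes n: "n \<ge> 2" and I: "I \<subseteq> Sset n" "I \<noteq> Sset n"
  shows "finite (parab n I)"
proof -
  let ?P = "mem_mod n I"
  obtain a where a: "a \<in> Sset n" "a \<notin> I" using I by blast
  have ar: "0 \<le> a" "a < int n" using a unfolding Sset_def by auto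
  have n0: "n > 0" using n by simp
  define f where "f = (\<lambda>v::int\<Rightarrow>int. restrict v {0..<int n})"
  have "f ` parab n I \<subseteq> PiE {0..<int n} (\<lambda>p. {p - int n..p + int n})"
  proof
    fix u assume "u \<in> f ` parab n I"
    then obtain v where v: "v \<in> parab n I" "u = f v" by blast
    have "v p \<in> {p - int n..p + int n}" for p
      using parab_run_bounds(3,4)[OF n I v(1), of p] run_end_bound[OF n0 ar a(2), of p] run_start_bound[OF n0 ar a(2), of p] by simp
    then have "\<forall>p\<in>{0..<int n}. v p \<in> {p - int n..p + int n}" by blast
    then show "u \<in> PiE {0..<int n} (\<lambda>p. {p - int n..p + int n})" unfolding v(2) f_def by (simp only: restrict_PiE_iff)
  qed
  moreover have "finite (PiE {0..<int n} (\<lambda>p. {p - int n..p + int n}))" by (rule finite_PiE) auto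
  moreover have "inj_on f (parab n I)"
  proof
    fix v1 v2 assume v: "v1 \<in> parab n I" "v2 \<in> parab n I" "f v1 = f v2"
    have w: "in_W n v1" "in_W n v2" using parab_in_W[OF I(1)] v by auto
    show "v1 = v2"
    proof
      fix p
      have pm: "p mod int n \<in> {0..<int n}" using n0 by simp
      have "f v1 (p mod int n) = f v2 (p mod int n)" using v(3) by simp
      then have "v1 (p mod int n) = v2 (p mod int n)" using pm unfolding f_def by simp
      moreover have "v1 p = v1 (p mod int n) + int n * (p div int n)" using in_W_shift[OF w(1), of "p mod int n" "p div int n"] by simp
      moreover have "v2 p = v2 (p mod int n) + int n * (p div int n)" using in_W_shift[OF w(2), of "p mod int n" "p div int n"] by simp
      ultimately show "v1 p = v2 p" by simp
    qed
  qed
  ultimately have "finite (f ` parab n I)" "inj_on f (parab n I)" using finite_subset by auto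
  then show ?thesis using finite_imageD by blast
qed

lemma antimono_interval_reversal:
  fixes f :: "int \<Rightarrow> int"
  assumes dec: "\<And>t. B \<le> t \<Longrightarrow> t < E \<Longrightarrow> f (t + 1) < f t"
    and rng: "\<And>t. B \<le> t \<Longrightarrow> t \<le> E \<Longrightarrow> B \<le> f t \<and> f t \<le> E"
    and t: "B \<le> t" "t \<le> E"
  shows "f t = B + E - t"
proof -
  have inc: "- f s < - f (s + 1)" if "B \<le> s" "s < E" for s using dec[OF that] by simp
  have "- f B + (t - B) \<le> - f t" using step_mono_gap[of B t "\<lambda>s. - f s"] inc t by simp
  moreover have "- f t + (E - t) \<le> - f E" using step_mono_gap[of t E "\<lambda>s. - f s"] inc t by simp
  ultimately show ?thesis using rng[of B] rng[of E] t by simp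
qed

lemma longest_candidate_eq_run_rev:
  assumes n: "n \<ge> 2" and I: "I \<subseteq> Sset n" "I \<noteq> Sset n" and w: "w \<in> parab n I"
    and mx: "\<forall>v\<in>parab n I. len n v \<le> len n w"
  shows "w = run_rev (mem_mod n I)"
proof
  fix p
  let ?P = "mem_mod n I"
  have g: "runs_bounded ?P" by (rule runs_bounded_proper[OF n I])
  have wW: "in_W n w" using parab_in_W[OF I(1) w] .
  have desc0: "w (i + 1) < w i" if "i \<in> I" for i
  proof (rule ccontr)
    assume "\<not> w (i + 1) < w i"
    moreover have iS: "i \<in> Sset n" using that I by auto
    ultimately have lt: "w i < w (i+1)" using in_W_neq_Suc[OF n wW, of i] by simp
    have "w \<circ> sref n i \<in> parab n I"
    proof -
      obtain ws where "set ws \<subseteq> I" "w = word_prod n ws" using w unfolding parab_def by blast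
      then show ?thesis unfolding parab_def using that by (intro CollectI exI[of _ "ws @ [i]"]) (auto simp: word_prod_snoc)
    qed
    then have "len n (w \<circ> sref n i) \<le> len n w" using mx by blast
    then show False using len_comp_sref[OF n wW iS] lt by simp
  qed
  have desc: "w (t + 1) < w t" if "?P t" for t
  proof -
    have "w (t mod int n + 1) < w (t mod int n)" using desc0 that unfolding mem_mod_def by blast
    then have "\<not> w t < w (t + 1)" using in_W_ascent_mod[OF wW, of t] by simp
    then show ?thesis using in_W_neq_Suc[OF n wW, of t] by simp
  qed
  let ?B = "run_start ?P p" and ?E = "run_end ?P p"
  have "w p = ?B + ?E - p"
  proof (rule antimono_interval_reversal[of ?B ?E w])
    fix t assume "?B \<le> t" "t < ?E"
    then show "w (t + 1) < w t" using desc in_run by blast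
  next
    fix t assume t: "?B \<le> t" "t \<le> ?E"
    then have "run_start ?P t = ?B" "run_end ?P t = ?E" using same_run[OF g, of p t] by auto
    then show "?B \<le> w t \<and> w t \<le> ?E" using parab_run_bounds(3,4)[OF n I w, of t] by simp
  next
    show "?B \<le> p" "p \<le> ?E" using run_start_le run_end_ge by auto
  qed
  then show "w p = run_rev ?P p" unfolding run_rev_def by simp
qed

lemma longest_eq_run_rev:
  assumes n: "n \<ge> 2" and I: "I \<subseteq> Sset n" "I \<noteq> Sset n"
  shows "longest n I = run_rev (mem_mod n I)" "run_rev (mem_mod n I) \<in> parab n I"
proof -
  have fin: "finite (len n ` parab n I)" using parab_finite[OF n I] by simp
  have ne: "id \<in> parab n I" unfolding parab_def by (intro CollectI exI[of _ "[]"]) simp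
  then have ne': "len n ` parab n I \<noteq> {}" by auto
  obtain w where w: "w \<in> parab n I" "len n w = Max (len n ` parab n I)"
    using Max_in[OF fin ne'] by auto
  have mx: "\<forall>v\<in>parab n I. len n v \<le> len n w" using w(2) Max_ge[OF fin] by simp
  have wW: "w = run_rev (mem_mod n I)" by (rule longest_candidate_eq_run_rev[OF n I w(1) mx])
  have "longest n I = w" unfolding longest_def
  proof (rule the_equality)
    show "w \<in> parab n I \<and> (\<forall>v\<in>parab n I. len n v \<le> len n w)" using w(1) mx by simp
    fix u assume "u \<in> parab n I \<and> (\<forall>v\<in>parab n I. len n v \<le> len n u)"
    then show "u = w" using longest_candidate_eq_run_rev[OF n I] wW by blast
  qed
  then show "longest n I = run_rev (mem_mod n I)" using wW by simp
  show "run_rev (mem_mod n I) \<in> parab n I" using w(1) wW by simp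
qed

section \<open>The product \<open>w\<^sub>I h\<^sub>X\<close>\<close>

text \<open>Throughout, \<open>P\<close> and \<open>Q\<close> stand for the lifts of \<open>I\<close> and \<open>X\<close>, and the hypothesis
\<open>P (p - 1) \<Longrightarrow> Q p\<close> is the lifted form of \<open>\<tau>(I) \<subseteq> X\<close>.\<close>

lemma run_end_gt_if_covers:
  assumes g: "runs_bounded Q" and cover: "\<And>t. q \<le> t \<Longrightarrow> t \<le> e \<Longrightarrow> Q t"
  shows "e < run_end Q q"
proof (rule ccontr)
  assume "\<not> e < run_end Q q"
  then have "Q (run_end Q q)" using cover run_end_ge[of q Q] by simp
  then show False using not_at_run_end[OF g] by blast
qed

lemma run_end_lt_run_rev:
  assumes g: "runs_bounded P" and "run_end P i < c"
  shows "run_end P i < run_rev P c"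
proof -
  have "run_start P (run_end P i + 1) = run_end P i + 1"
    using run_start_self[of P "run_end P i + 1"] not_at_run_end[OF g, of i] by simp
  then have "run_end P i + 1 \<le> run_start P c" using run_start_mono[OF g, of "run_end P i + 1" c] assms(2) by simp
  then show ?thesis using run_rev_bounds(1)[of P c] by simp
qed

lemma run_end_lt_run_end_lift:
  assumes gQ: "runs_bounded Q" and JX: "\<And>p. P (p - 1) \<Longrightarrow> Q p"
    and "q \<le> i + 1" and Q: "\<And>t. q \<le> t \<Longrightarrow> t \<le> i \<Longrightarrow> Q t"
  shows "run_end P i < run_end Q q"
proof (rule run_end_gt_if_covers[OF gQ])
  fix t assume t: "q \<le> t" "t \<le> run_end P i"
  show "Q t"
  proof (cases "t \<le> i")
    case False
    then have "P (t - 1)" using in_run_right[of i "t - 1" P] t by simp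
    then show ?thesis by (rule JX)
  qed (use Q t in simp)
qed

lemma le_run_rev_not_lift:
  assumes JX: "\<And>p. P (p - 1) \<Longrightarrow> Q p" and "\<not> Q c"
  shows "c \<le> run_rev P c"
  using run_rev_ge_start[of P c] JX assms(2) by blast

lemma run_rev_hmap_descent_iff:
  assumes gP: "runs_bounded P" and gQ: "runs_bounded Q" and JX: "\<And>p. P (p - 1) \<Longrightarrow> Q p"
  shows "run_rev P (hmap Q (i+1)) < run_rev P (hmap Q i) \<longleftrightarrow> P (i - 1) \<or> (Q i \<and> \<not> Q (i - 1))"
proof -
  let ?c = "\<lambda>q. run_end Q q"
  have c_ge: "?c q \<le> run_rev P (?c q)" for q
    using le_run_rev_not_lift[of P Q "?c q"] JX not_at_run_end[OF gQ] by blast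
  consider "Q (i - 1)" "Q i" | "Q (i - 1)" "\<not> Q i" | "\<not> Q (i - 1)" "Q i" | "\<not> Q (i - 1)" "\<not> Q i"
    by blast
  then show ?thesis
  proof cases
    case 1
    then show ?thesis unfolding hmap_def using run_rev_descent_iff[OF gP, of "i - 1"] by simp
  next
    case 2
    then have nP: "\<not> P (i - 1)" using JX by blast
    then have "run_rev P (i - 1) \<le> i - 1" by (rule run_rev_le_notin)
    then show ?thesis unfolding hmap_def using 2 nP c_ge[of "i+1"] run_end_ge[of "i+1" Q] by simp
  next
    case 3
    have "run_end P i < ?c i" using run_end_lt_run_end_lift[OF gQ JX, where q = i and i = i] 3 by simp
    then have "run_rev P i < run_rev P (?c i)"
      using run_end_lt_run_rev[OF gP] run_rev_bounds(2)[of P i] by (meson order.strict_trans1)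
    then show ?thesis unfolding hmap_def using 3 by simp
  next
    case 4
    then have "\<not> P (i - 1)" using JX by blast
    have "run_end P i < ?c (i + 1)" using run_end_lt_run_end_lift[OF gQ JX, where q = "i + 1" and i = i] by simp
    then have "run_rev P i < run_rev P (?c (i + 1))"
      using run_end_lt_run_rev[OF gP] run_rev_bounds(2)[of P i] by (meson order.strict_trans1)
    then show ?thesis unfolding hmap_def using 4 run_end_self[of Q i] \<open>\<not> P (i - 1)\<close> by simp
  qed
qed

text \<open>The witness \<open>j\<close> is the last point outside \<open>Q\<close> in the run of \<open>P\<close> through \<open>j\<^sub>0\<close>.\<close>

lemma run_rev_hmap_ascent:
  assumes gP: "runs_bounded P" and gQ: "runs_bounded Q" and j0: "P (j0 - 1)" "\<not> Q j0"
  shows "\<exists>j. P (j - 1) \<and> \<not> Q j \<and> run_rev P (hmap Q j) < run_rev P (hmap Q (j + 1))"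
proof -
  let ?E = "run_end P j0"
  define S where "S = {t \<in> {j0..?E}. \<not> Q t}"
  have fin: "finite S" unfolding S_def by (rule finite_subset[of _ "{j0..?E}"]) auto
  have "j0 \<in> S" unfolding S_def using j0 run_end_ge[of j0 P] by simp
  define j where "j = Max S"
  have "j \<in> S" unfolding j_def using fin \<open>j0 \<in> S\<close> Max_in by blast
  then have j: "j0 \<le> j" "j \<le> ?E" "\<not> Q j" unfolding S_def by auto
  have above: "Q t" if "j < t" "t \<le> ?E" for t
    using that j Max_ge[OF fin, of t] unfolding j_def S_def by force
  have Pj: "P (j - 1)"
    using j0(1) in_run_right[of j0 "j - 1" P] j by (cases "j = j0") auto
  have start: "run_start P (j0 - 1) \<le> j - 1" using run_start_le[of P "j0 - 1"] j by simp
  have endE: "run_end P (j0 - 1) = ?E" using run_end_Suc[OF gP j0(1)] by simp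
  have "hmap Q j \<in> {j - 1, j}" unfolding hmap_def using run_end_self[of Q j] j(3) by auto
  then have "run_end P (hmap Q j) = ?E"
    using same_run(2)[OF gP, of "j0 - 1" "hmap Q j"] start endE j by auto
  then have "run_rev P (hmap Q j) \<le> ?E" using run_rev_bounds(2)[of P "hmap Q j"] by simp
  moreover have "?E < run_rev P (hmap Q (j + 1))"
  proof -
    have "?E < run_end Q (j + 1)" by (rule run_end_gt_if_covers[OF gQ above]) auto
    then show ?thesis
      unfolding hmap_def using j(3) run_end_lt_run_rev[OF gP] by simp
  qed
  ultimately show ?thesis using Pj j(3) by (intro exI[of _ j]) simp
qed

lemma run_end_conj_lift:
  assumes gP: "runs_bounded P" and gQ: "runs_bounded Q" and JX: "\<And>p. P (p - 1) \<Longrightarrow> Q p"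
    and R: "\<And>p. R p \<longleftrightarrow> P p \<or> Q (run_start P p)" and "\<not> Q (p - 1)"
  shows "run_end R (run_end P (p - 1) + 1) = run_end P (run_end Q p)"
proof (rule run_end_eqI)
  let ?E = "run_end P (p - 1)" and ?c = "run_end Q p"
  have ncQ: "\<not> Q ?c" by (rule not_at_run_end[OF gQ])
  have bc: "run_start P ?c = ?c" using run_start_self[of P ?c] JX ncQ by blast
  have cE: "?E < ?c" using run_end_lt_run_end_lift[OF gQ JX, where q = p and i = "p - 1"] by simp
  then show "?E + 1 \<le> run_end P ?c" using run_end_ge[of ?c P] by simp
  have "run_start P (run_end P ?c) = ?c"
    using same_run(1)[OF gP, of ?c "run_end P ?c"] bc run_end_ge[of ?c P] by simp
  then show "\<not> R (run_end P ?c)" using R not_at_run_end[OF gP, of ?c] ncQ by simp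
  fix t assume t: "?E + 1 \<le> t" "t < run_end P ?c"
  show "R t"
  proof (cases "?c \<le> t")
    case True
    then show ?thesis using R in_run[of P ?c t] bc t by simp
  next
    case False
    have "run_start P (?E + 1) = ?E + 1" using run_start_self[of P "?E + 1"] not_at_run_end[OF gP] by simp
    then have "?E + 1 \<le> run_start P t" using run_start_mono[OF gP, of "?E + 1" t] t by simp
    then have "Q (run_start P t)"
      using in_run_right[of p "run_start P t" Q] False run_start_le[of P t] run_end_ge[of "p - 1" P] by simp
    then show ?thesis using R by simp
  qed
qed

text \<open>\<open>R\<close> is the lift of the set \<open>Y\<close> with \<open>w\<^sub>I h\<^sub>X = h\<^sub>Y w\<^sub>J\<close>; the right-hand side below is
\<open>h\<^sub>Y (w\<^sub>J p)\<close>, since \<open>w\<^sub>J\<close> is \<open>w\<^sub>I\<close> conjugated by the shift \<open>p \<mapsto> p + 1\<close>.\<close>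

lemma run_rev_hmap_eq:
  assumes gP: "runs_bounded P" and gQ: "runs_bounded Q" and JX: "\<And>p. P (p - 1) \<Longrightarrow> Q p"
    and R: "\<And>p. R p \<longleftrightarrow> P p \<or> Q (run_start P p)"
  shows "run_rev P (hmap Q p) = hmap R (run_rev P (p - 1) + 1)"
proof (cases "Q (p - 1)")
  case True
  let ?q = "p - 1"
  let ?m = "run_rev P ?q"
  have "R ?m"
  proof (cases "run_start P ?q < ?q")
    case True
    then have "?m < run_end P ?q" "run_start P ?q \<le> ?m"
      unfolding run_rev_def using run_end_ge[of ?q P] by auto
    then show ?thesis using R in_run by blast
  next
    case False
    then have b: "run_start P ?q = ?q" using run_start_le[of P ?q] by simp
    then have "?m = run_end P ?q" unfolding run_rev_def by simp
    then have "run_start P ?m = ?q" using same_run(1)[OF gP, of ?q ?m] b run_end_ge[of ?q P] by simp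
    then show ?thesis using R \<open>Q (p - 1)\<close> by simp
  qed
  then show ?thesis unfolding hmap_def using True by simp
next
  case False
  let ?q = "p - 1" and ?E = "run_end P (p - 1)" and ?c = "run_end Q p"
  have "\<not> P (?q - 1)" using JX False by blast
  then have bq: "run_start P ?q = ?q" by (rule run_start_self)
  have bE: "run_start P ?E = ?q" using same_run(1)[OF gP, of ?q ?E] bq run_end_ge[of ?q P] by simp
  have "\<not> R ?E" using R not_at_run_end[OF gP] bE False by simp
  then have "hmap R (run_rev P ?q + 1) = run_end P ?c"
    unfolding hmap_def run_rev_def bq using run_end_conj_lift[OF gP gQ JX R False] by simp
  moreover have "run_start P ?c = ?c" using run_start_self[of P ?c] JX not_at_run_end[OF gQ] by blast
  ultimately show ?thesis unfolding hmap_def run_rev_def using False by simp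
qed

lemma conj_lift_holds_on_run:
  assumes gP: "runs_bounded P" and R: "\<And>p. R p \<longleftrightarrow> P p \<or> Q (run_start P p)"
    and "R i" "run_start P i \<le> t" "t \<le> i"
  shows "R t"
proof (cases "P i \<and> t < i")
  case True
  then show ?thesis using in_run_left[of P i t] assms(4) R by simp
next
  case False
  then have "t = i \<or> Q (run_start P i)" using R assms(3,5) by auto
  moreover have "run_start P t = run_start P i"
    using same_run(1)[OF gP, of i t] assms(4,5) run_end_ge[of i P] by simp
  ultimately show ?thesis using R assms(3) by auto
qed

lemma run_rev_before_run_start:
  assumes gR: "runs_bounded R" and PR: "\<And>p. P p \<Longrightarrow> R p"
  shows "run_rev P (run_start R q - 1) \<le> run_start R q - 1"
  using run_rev_le_notin not_before_run_start[OF gR] PR by blast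

lemma run_rev_hmap_inv_descent_iff:
  assumes gP: "runs_bounded P" and gR: "runs_bounded R" and R: "\<And>p. R p \<longleftrightarrow> P p \<or> Q (run_start P p)"
  shows "run_rev P (hmap_inv R (i+1) - 1) < run_rev P (hmap_inv R i - 1) \<longleftrightarrow> P i \<or> (R i \<and> \<not> R (i + 1))"
proof -
  have PR: "\<And>p. P p \<Longrightarrow> R p" using R by blast
  let ?c = "\<lambda>q. run_start R q"
  have c_le: "run_rev P (?c q - 1) < run_rev P i" if "?c q \<le> run_start P i" for q
    using run_rev_before_run_start[where R = R and P = P and q = q, OF gR PR] run_rev_bounds(1)[of P i] that by simp
  consider "R i" "R (i + 1)" | "R i" "\<not> R (i + 1)" | "\<not> R i" "R (i + 1)" | "\<not> R i" "\<not> R (i + 1)"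
    by blast
  then show ?thesis
  proof cases
    case 1
    then show ?thesis unfolding hmap_inv_def using run_rev_descent_iff[OF gP, of i] by (simp add: ac_simps)
  next
    case 2
    have "?c (i + 1) \<le> run_start P i"
      using run_start_le_if_run[OF gR, of "run_start P i" "i + 1"] conj_lift_holds_on_run[OF gP R 2(1)]
        run_start_le[of P i] by simp
    then show ?thesis unfolding hmap_inv_def using 2 c_le by simp
  next
    case 3
    then have "\<not> P i" using PR by blast
    then have "i + 1 \<le> run_rev P (i + 1)" using run_rev_ge_start[of P "i + 1"] by simp
    moreover have "?c i - 1 < i" using run_start_le[of R i] by simp
    ultimately show ?thesis unfolding hmap_inv_def
      using 3 \<open>\<not> P i\<close> run_rev_before_run_start[where R = R and P = P and q = i, OF gR PR]
      by (simp add: ac_simps)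
  next
    case 4
    then have "\<not> P i" using PR by blast
    have "?c i \<le> run_start P i"
      using run_start_le_if_run[OF gR, of "run_start P i" i] in_run_left[of P i] PR run_start_le[of P i] by simp
    then have "run_rev P (?c i - 1) < run_rev P i" by (rule c_le)
    then show ?thesis unfolding hmap_inv_def using 4 \<open>\<not> P i\<close> run_start_self[of R "i + 1"] by simp
  qed
qed

lemma run_rev_hmap_ascent_fresh:
  assumes gP: "runs_bounded P" and gZ: "runs_bounded Z" and Zy: "\<not> Z y" "\<not> Z (y - 1)"
    and cover: "\<And>t. y + 1 \<le> t \<Longrightarrow> t \<le> run_end P y \<Longrightarrow> Z t"
  shows "run_rev P (hmap Z y) < run_rev P (hmap Z (y + 1))"
proof -
  have "run_end P y < run_end Z (y + 1)" by (rule run_end_gt_if_covers[OF gZ cover])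
  then have "run_end P y < run_rev P (run_end Z (y + 1))" by (rule run_end_lt_run_rev[OF gP])
  then show ?thesis unfolding hmap_def using Zy run_end_self[of Z y] run_rev_bounds(2)[of P y] by simp
qed

lemma cyclic_key_add:
  assumes n: "n > 0" and a: "0 \<le> a" "a < int n" and y: "0 \<le> y" "y < int n"
  shows "(\<forall>d'. 1 \<le> d' \<and> d' \<le> d \<longrightarrow> (y + int d') mod int n \<noteq> a) \<Longrightarrow>
         (y + int d - a) mod int n = (y - a) mod int n + int d"
proof (induction d)
  case (Suc d)
  have IH: "(y + int d - a) mod int n = (y - a) mod int n + int d" using Suc by auto
  define K where "K = (y + int d - a) mod int n"
  have K: "0 \<le> K" "K < int n" unfolding K_def using n by auto
  have e: "y + int (Suc d) - a = (y + int d - a) + 1" by simp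
  have "(y + int (Suc d) - a) mod int n = (K + 1) mod int n" unfolding e K_def by (simp add: mod_add_left_eq)
  moreover have "K + 1 \<noteq> int n"
  proof
    assume "K + 1 = int n"
    then have "(y + int (Suc d) - a) mod int n = 0" using calculation by simp
    then have "(y + int (Suc d)) mod int n = a mod int n" by (simp add: mod_eq_dvd_iff mod_eq_0_iff_dvd)
    then show False using Suc.prems a by auto
  qed
  ultimately have "(y + int (Suc d) - a) mod int n = K + 1" using K by simp
  then show ?case using IH unfolding K_def by simp
qed simp

text \<open>Walking up from \<open>y\<close> without meeting the class of \<open>a \<notin> X\<close> increases the cyclic key
\<open>(x - a) mod n\<close>, so every class met lies above \<open>y\<close> in the order used to define \<open>h\<^sub>X\<close>.\<close>

lemma mem_mod_key_upper_set:
  assumes n: "n > 0" and a: "0 \<le> a" "a < int n" "a \<notin> X" and y: "0 \<le> y" "y < int n"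
    and up: "\<And>x. x \<in> X \<Longrightarrow> (y - a) mod int n < (x - a) mod int n \<Longrightarrow> x \<in> Z"
    and X: "\<And>t. y + 1 \<le> t \<Longrightarrow> t \<le> e \<Longrightarrow> mem_mod n X t"
    and t: "y + 1 \<le> t" "t \<le> e"
  shows "mem_mod n Z t"
proof -
  define d where "d = nat (t - y)"
  have td: "t = y + int d" "d > 0" unfolding d_def using t by simp_all
  have "\<forall>d'. 1 \<le> d' \<and> d' \<le> d \<longrightarrow> (y + int d') mod int n \<noteq> a"
    using X[of "y + int _"] t td a(3) unfolding mem_mod_def by force
  then have "(t - a) mod int n = (y - a) mod int n + int d" using cyclic_key_add[OF n a(1,2) y] td by simp
  moreover have "((t mod int n) - a) mod int n = (t - a) mod int n" by (simp add: mod_diff_left_eq)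
  ultimately have "(y - a) mod int n < ((t mod int n) - a) mod int n" using td by simp
  moreover have "t mod int n \<in> X" using X[OF t] unfolding mem_mod_def .
  ultimately show ?thesis unfolding mem_mod_def using up by blast
qed

lemma len_run_rev_comp_hword:
  assumes n: "n \<ge> 2" and I: "I \<subseteq> Sset n" "I \<noteq> Sset n" and X: "X \<subseteq> Sset n" "X \<noteq> Sset n"
    and JX: "\<And>p. mem_mod n I (p - 1) \<Longrightarrow> mem_mod n X p"
    and aS: "a \<in> Sset n" "a \<notin> X"
  shows "set ys \<subseteq> X \<Longrightarrow> distinct ys \<Longrightarrow> sorted (map (\<lambda>x. (x - a) mod int n) ys) \<Longrightarrow>
    (\<forall>y\<in>set ys. \<forall>x\<in>X. (y - a) mod int n < (x - a) mod int n \<longrightarrow> x \<in> set ys) \<Longrightarrow>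
    len n (run_rev (mem_mod n I) \<circ> word_prod n (rev ys)) = len n (run_rev (mem_mod n I)) + length ys"
proof (induction ys)
  case (Cons y zs)
  let ?key = "\<lambda>x. (x - a) mod int n"
  let ?P = "mem_mod n I" and ?Z = "mem_mod n (set zs)"
  have n0: "n > 0" using n by simp
  have ar: "0 \<le> a" "a < int n" using aS unfolding Sset_def by auto
  have yS: "y \<in> Sset n" and yr: "0 \<le> y" "y < int n" using Cons.prems X unfolding Sset_def by auto
  have zsS: "set zs \<subseteq> Sset n" "set zs \<noteq> Sset n" using Cons.prems X by auto
  have up: "x \<in> set zs" if "x \<in> X" "?key y < ?key x" for x
    using Cons.prems(4) that by auto
  have "len n (run_rev ?P \<circ> word_prod n (rev zs)) = len n (run_rev ?P) + length zs"
  proof (rule Cons.IH)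
    show "\<forall>z\<in>set zs. \<forall>x\<in>X. ?key z < ?key x \<longrightarrow> x \<in> set zs"
      using Cons.prems(3) up by fastforce
  qed (use Cons.prems in auto)
  then have IH: "len n (run_rev ?P \<circ> hmap ?Z) = len n (run_rev ?P) + length zs" if "word_prod n (rev zs) = hmap ?Z"
    using that by simp
  have pnl: "pred_not_later n (y # zs)"
    by (rule pred_not_later_if_sorted[OF n0 ar]) (use Cons.prems X aS in auto)
  let ?u = "run_rev ?P \<circ> hmap ?Z"
  have Hz: "word_prod n (rev zs) = hmap ?Z" using word_prod_rev_hmap[OF n zsS] pnl by simp
  have uW: "in_W n ?u"
    using in_W_comp[OF parab_in_W[OF I(1) longest_eq_run_rev(2)[OF n I]] in_W_word_prod[of "rev zs"]] zsS Hz
    by simp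
  have asc: "?u y < ?u (y + 1)" unfolding comp_def
  proof (rule run_rev_hmap_ascent_fresh)
    show "runs_bounded ?P" "runs_bounded ?Z" using runs_bounded_proper[OF n] I zsS by auto
    show "\<not> ?Z y" "\<not> ?Z (y - 1)" unfolding mem_mod_def using yr Cons.prems(2) pnl by auto
    have PX: "mem_mod n X t" if "y + 1 \<le> t" "t \<le> run_end ?P y" for t
      using JX in_run_right[of y "t - 1" ?P] that by simp
    fix t assume "y + 1 \<le> t" "t \<le> run_end ?P y"
    then show "?Z t" using mem_mod_key_upper_set[OF n0 ar aS(2) yr, of "set zs" "run_end ?P y"] up PX by blast
  qed
  have "run_rev ?P \<circ> word_prod n (rev (y # zs)) = ?u \<circ> sref n y" by (simp add: word_prod_snoc comp_assoc Hz)
  then have "len n (run_rev ?P \<circ> word_prod n (rev (y # zs))) = len n ?u + 1"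
    using len_comp_sref[OF n uW yS] asc by simp
  then show ?case using IH[OF Hz] by (metis add_Suc_right Suc_eq_plus1 length_Cons)
qed simp

lemma tau_image_proper:
  assumes n: "n \<ge> 2" and I: "I \<subset> Sset n"
  shows "tau n ` I \<subset> Sset n"
proof -
  have J: "tau n ` I \<subseteq> Sset n" unfolding tau_def Sset_def using n by auto
  obtain i0 where i0: "i0 \<in> Sset n" "i0 \<notin> I" using I by blast
  have "(i0 + 1) mod int n \<notin> tau n ` I"
  proof
    assume "(i0 + 1) mod int n \<in> tau n ` I"
    then have "mem_mod n I i0" using mem_mod_tau[of I n "i0 + 1"] I n unfolding mem_mod_def by auto
    then show False using i0 mem_mod_Sset by blast
  qed
  moreover have "(i0 + 1) mod int n \<in> Sset n" unfolding Sset_def using n by simp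
  ultimately show ?thesis using J by blast
qed

lemma tau_subset_iff_lift:
  assumes n: "n > 0" and I: "I \<subseteq> Sset n" and X: "X \<subseteq> Sset n"
  shows "tau n ` I \<subseteq> X \<longleftrightarrow> (\<forall>p. mem_mod n I (p - 1) \<longrightarrow> mem_mod n X p)"
proof
  assume "tau n ` I \<subseteq> X"
  then show "\<forall>p. mem_mod n I (p - 1) \<longrightarrow> mem_mod n X p"
    using mem_mod_tau[OF I n] unfolding mem_mod_def by blast
next
  assume lift: "\<forall>p. mem_mod n I (p - 1) \<longrightarrow> mem_mod n X p"
  show "tau n ` I \<subseteq> X"
  proof
    fix j assume j: "j \<in> tau n ` I"
    then have jS: "j \<in> Sset n" unfolding tau_def Sset_def using n by auto
    then have "mem_mod n (tau n ` I) j" using j mem_mod_Sset by blast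
    then show "j \<in> X" using lift mem_mod_tau[OF I n] mem_mod_Sset[OF jS] by blast
  qed
qed

lemma in_W_hX:
  assumes n: "n \<ge> 2" and X: "X \<subset> Sset n"
  shows "in_W n (hX n X)"
proof -
  obtain xs a where "set xs = X" "hX n X = word_prod n (rev xs)" using hX_word[OF n] X by blast
  then show ?thesis using X in_W_word_prod[of "rev xs" n] by auto
qed

lemma in_W_longest:
  assumes n: "n \<ge> 2" and I: "I \<subset> Sset n"
  shows "in_W n (longest n I)"
  using parab_in_W longest_eq_run_rev[OF n] I by (metis psubsetE)

lemma rdes_longest_comp_hX:
  assumes n: "n \<ge> 2" and I: "I \<subset> Sset n" and X: "X \<subset> Sset n" and JX: "tau n ` I \<subseteq> X"
  shows "rdes n (longest n I \<circ> hX n X) = tau n ` I \<union> {x \<in> X. (x - 1) mod int n \<notin> X}"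
proof -
  let ?P = "mem_mod n I" and ?Q = "mem_mod n X"
  have lift: "\<And>p. ?P (p - 1) \<Longrightarrow> ?Q p" using tau_subset_iff_lift[of n I X] n I X JX by auto
  have F: "longest n I \<circ> hX n X = run_rev ?P \<circ> hmap ?Q"
    using longest_eq_run_rev(1)[OF n] hX_eq_hmap[OF n] I X by auto
  have "i \<in> rdes n (longest n I \<circ> hX n X) \<longleftrightarrow> i \<in> tau n ` I \<union> {x \<in> X. (x - 1) mod int n \<notin> X}"
    if iS: "i \<in> Sset n" for i
  proof -
    have "i \<in> rdes n (longest n I \<circ> hX n X) \<longleftrightarrow> ?P (i - 1) \<or> (?Q i \<and> \<not> ?Q (i - 1))"
      using rdes_in_W[OF n in_W_comp[OF in_W_longest[OF n I] in_W_hX[OF n X]]] iS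
        run_rev_hmap_descent_iff[OF _ _ lift] runs_bounded_proper[OF n] I X unfolding F by auto
    moreover have "?P (i - 1) \<longleftrightarrow> i \<in> tau n ` I" using mem_mod_tau[of I n i] mem_mod_Sset[OF iS] I n by auto
    ultimately show ?thesis using mem_mod_Sset[OF iS] unfolding mem_mod_def by auto
  qed
  moreover have "tau n ` I \<subseteq> Sset n" using tau_image_proper[OF n I] by auto
  ultimately show ?thesis using X unfolding rdes_def by auto
qed

lemma tau_subset_if_tau_subset_rdes:
  assumes n: "n \<ge> 2" and I: "I \<subset> Sset n" and X: "X \<subset> Sset n"
    and JR: "tau n ` I \<subseteq> rdes n (longest n I \<circ> hX n X)"
  shows "tau n ` I \<subseteq> X"
proof (rule ccontr)
  let ?P = "mem_mod n I" and ?Q = "mem_mod n X"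
  let ?F = "longest n I \<circ> hX n X"
  assume "\<not> tau n ` I \<subseteq> X"
  then obtain j0 where "?P (j0 - 1)" "\<not> ?Q j0" using tau_subset_iff_lift[of n I X] n I X by auto
  then obtain j where j: "?P (j - 1)" "\<not> ?Q j" "run_rev ?P (hmap ?Q j) < run_rev ?P (hmap ?Q (j + 1))"
    using run_rev_hmap_ascent runs_bounded_proper[OF n] I X by (metis psubsetE)
  have F: "?F p = run_rev ?P (hmap ?Q p)" for p
    using longest_eq_run_rev(1)[OF n] hX_eq_hmap[OF n] I X by auto
  have FW: "in_W n ?F" using in_W_comp[OF in_W_longest[OF n I] in_W_hX[OF n X]] .
  have iS: "j mod int n \<in> Sset n" unfolding Sset_def using n by simp
  have "j mod int n \<in> tau n ` I" using mem_mod_tau[of I n j] j(1) I n unfolding mem_mod_def by auto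
  moreover have "?F (j mod int n) < ?F (j mod int n + 1)" using in_W_ascent_mod[OF FW, of j] j(3) F by simp
  then have "j mod int n \<notin> rdes n ?F" using rdes_in_W[OF n FW] by auto
  ultimately show False using JR by blast
qed

lemma len_longest_comp_hX:
  assumes n: "n \<ge> 2" and I: "I \<subset> Sset n" and X: "X \<subset> Sset n" and JX: "tau n ` I \<subseteq> X"
  shows "len n (longest n I \<circ> hX n X) = len n (longest n I) + len n (hX n X)"
proof -
  have I': "I \<subseteq> Sset n" "I \<noteq> Sset n" and X': "X \<subseteq> Sset n" "X \<noteq> Sset n" using I X by auto
  have lift: "\<And>p. mem_mod n I (p - 1) \<Longrightarrow> mem_mod n X p" using tau_subset_iff_lift[of n I X] n I' X' JX by auto
  obtain xs a where xs: "a \<in> Sset n" "a \<notin> X" "set xs = X" "distinct xs"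
    "sorted (map (\<lambda>x. (x - a) mod int n) xs)" "hX n X = word_prod n (rev xs)"
    using hX_word[OF n X'] by blast
  have "len n (run_rev (mem_mod n I) \<circ> hX n X) = len n (run_rev (mem_mod n I)) + length xs"
    using len_run_rev_comp_hword[OF n I' X' lift xs(1,2), of xs] xs by simp
  moreover have "len n (run_rev (mem_mod n {}) \<circ> hX n X) = len n (run_rev (mem_mod n {})) + length xs"
    using len_run_rev_comp_hword[OF n _ _ X' _ xs(1,2), of "{}" xs] xs n unfolding mem_mod_def Sset_def by auto
  then have "len n (hX n X) = length xs" using len_id[OF n] unfolding run_rev_empty by simp
  ultimately show ?thesis using longest_eq_run_rev(1)[OF n I'] by simp
qed

text \<open>The set \<open>Y\<close> of the theorem: on each \<open>\<tau>\<close>-component it agrees with \<open>I\<close> or with the whole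
component, according as the first point of the component lies outside or inside \<open>X\<close>.\<close>

definition conj_set :: "nat \<Rightarrow> int set \<Rightarrow> int set \<Rightarrow> int set" where
  "conj_set n I X = {y \<in> Sset n. mem_mod n I y \<or> mem_mod n X (run_start (mem_mod n I) y)}"

lemma mem_mod_conj_set:
  assumes n: "n \<ge> 2" and I: "I \<subset> Sset n"
  shows "mem_mod n (conj_set n I X) p \<longleftrightarrow> mem_mod n I p \<or> mem_mod n X (run_start (mem_mod n I) p)"
proof -
  let ?P = "mem_mod n I"
  define R where "R p \<longleftrightarrow> ?P p \<or> mem_mod n X (run_start ?P p)" for p
  have gP: "runs_bounded ?P" using runs_bounded_proper[OF n] I by auto
  have "R (x + int n) = R x" for x
    unfolding R_def using run_start_shift[of ?P n, OF mem_mod_shift1 gP] mem_mod_shift1 by simp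
  then have "R p = R (p mod int n)" by (rule periodic_mod)
  moreover have "p mod int n \<in> Sset n" unfolding Sset_def using n by simp
  ultimately show ?thesis unfolding conj_set_def R_def[symmetric] mem_mod_def[of n "{y \<in> Sset n. R y}"] by simp
qed

lemma conj_set_proper:
  assumes n: "n \<ge> 2" and I: "I \<subset> Sset n" and X: "X \<subset> Sset n" and JX: "tau n ` I \<subseteq> X"
  shows "conj_set n I X \<subset> Sset n"
proof -
  let ?P = "mem_mod n I"
  have gP: "runs_bounded ?P" using runs_bounded_proper[OF n] I by auto
  obtain a where a: "a \<in> Sset n" "a \<notin> X" using X by blast
  then have nQa: "\<not> mem_mod n X a" using mem_mod_Sset by blast
  then have "\<not> ?P (a - 1)" using tau_subset_iff_lift[of n I X] n I X JX by auto
  then have "run_start ?P (run_end ?P a) = a"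
    using same_run(1)[OF gP, of a "run_end ?P a"] run_start_self[of ?P a] run_end_ge[of a ?P] by simp
  then have "\<not> mem_mod n (conj_set n I X) (run_end ?P a)"
    using mem_mod_conj_set[OF n I] not_at_run_end[OF gP] nQa by simp
  moreover have "run_end ?P a mod int n \<in> Sset n" unfolding Sset_def using n by simp
  moreover have "conj_set n I X \<subseteq> Sset n" unfolding conj_set_def by auto
  ultimately show ?thesis unfolding mem_mod_def by blast
qed

lemma longest_tau:
  assumes n: "n \<ge> 2" and I: "I \<subset> Sset n"
  shows "longest n (tau n ` I) p = longest n I (p - 1) + 1"
proof -
  have "mem_mod n (tau n ` I) p \<longleftrightarrow> mem_mod n I (p - 1)" for p using mem_mod_tau[of I n] I n by auto
  then show ?thesis
    using run_rev_shift longest_eq_run_rev(1)[OF n] tau_image_proper[OF n I] I by (metis psubsetE)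
qed

lemma longest_comp_hX_eq:
  assumes n: "n \<ge> 2" and I: "I \<subset> Sset n" and X: "X \<subset> Sset n" and JX: "tau n ` I \<subseteq> X"
  shows "longest n I \<circ> hX n X = hX n (conj_set n I X) \<circ> longest n (tau n ` I)"
proof
  fix p
  let ?P = "mem_mod n I" and ?Q = "mem_mod n X"
  let ?R = "\<lambda>p. ?P p \<or> ?Q (run_start ?P p)"
  have lift: "\<And>p. ?P (p - 1) \<Longrightarrow> ?Q p" using tau_subset_iff_lift[of n I X] n I X JX by auto
  have Y: "conj_set n I X \<subseteq> Sset n" "conj_set n I X \<noteq> Sset n"
    using conj_set_proper[OF n I X JX] by auto
  have "mem_mod n (conj_set n I X) = ?R" using mem_mod_conj_set[OF n I] by blast
  then have hY: "hX n (conj_set n I X) = hmap ?R" using hX_eq_hmap[OF n Y] by simp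
  have LI: "longest n I = run_rev ?P" using longest_eq_run_rev(1)[OF n] I by auto
  have hX: "hX n X = hmap ?Q" using hX_eq_hmap[OF n] X by auto
  have "run_rev ?P (hmap ?Q p) = hmap ?R (run_rev ?P (p - 1) + 1)"
    using run_rev_hmap_eq[OF _ _ lift] runs_bounded_proper[OF n] I X by auto
  then show "(longest n I \<circ> hX n X) p = (hX n (conj_set n I X) \<circ> longest n (tau n ` I)) p"
    unfolding comp_def longest_tau[OF n I] hY LI hX .
qed

lemma longest_longest:
  assumes n: "n \<ge> 2" and I: "I \<subset> Sset n"
  shows "longest n I (longest n I p) = p"
  using longest_eq_run_rev(1)[OF n] run_rev_run_rev runs_bounded_proper[OF n] I by auto

lemma hX_inj:
  assumes n: "n \<ge> 2" and Y: "Y \<subset> Sset n" and Y': "Y' \<subset> Sset n" and eq: "hX n Y = hX n Y'"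
  shows "Y = Y'"
proof -
  have "hmap (mem_mod n Y) = hmap (mem_mod n Y')" using eq hX_eq_hmap[OF n] Y Y' by auto
  then have "y \<in> Y \<longleftrightarrow> y \<in> Y'" if "y \<in> Sset n" for y
    using hmap_Suc_eq_iff[of "mem_mod n Y" y] hmap_Suc_eq_iff[of "mem_mod n Y'" y] mem_mod_Sset[OF that] by metis
  then show ?thesis using Y Y' by blast
qed

lemma tau_component_runE:
  assumes "A \<in> tau_components n I"
  obtains a k where "A = {(a + int j) mod int n | j. j \<le> k}" "\<not> mem_mod n I (a - 1)"
    "\<And>j. j \<le> k \<Longrightarrow> run_start (mem_mod n I) (a + int j) = a"
    "\<And>j. 1 \<le> j \<Longrightarrow> j \<le> k \<Longrightarrow> mem_mod n I (a + int j - 1)"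
proof -
  let ?P = "mem_mod n I"
  obtain a k where a: "A = {(a + int j) mod int n | j. j \<le> k}"
    "\<forall>j < k. (a + int j) mod int n \<in> I" "(a - 1) mod int n \<notin> I"
    using assms unfolding tau_components_def by blast
  have Pin: "?P (a + int j)" if "j < k" for j using a(2) that unfolding mem_mod_def by simp
  have nPa: "\<not> ?P (a - 1)" using a(3) unfolding mem_mod_def .
  have "run_start ?P (a + int j) = a" if "j \<le> k" for j
  proof (rule run_start_eqI)
    fix t assume "a \<le> t" "t < a + int j"
    then have "t = a + int (nat (t - a))" "nat (t - a) < k" using that by auto
    then show "?P t" using Pin by metis
  qed (use nPa in simp_all)
  moreover have "?P (a + int j - 1)" if "1 \<le> j" "j \<le> k" for j
    using Pin[of "j - 1"] that by (simp add: of_nat_diff algebra_simps)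
  ultimately show ?thesis using that a(1) nPa by blast
qed

lemma conj_set_tau_component:
  assumes n: "n \<ge> 2" and I: "I \<subset> Sset n" and X: "X \<subset> Sset n" and JX: "tau n ` I \<subseteq> X"
    and A: "A \<in> tau_components n I"
  shows "(X \<inter> A = tau n ` I \<inter> A \<and> conj_set n I X \<inter> A = I \<inter> A) \<or> (X \<inter> A = A \<and> conj_set n I X \<inter> A = A)"
proof -
  let ?P = "mem_mod n I" and ?Q = "mem_mod n X" and ?Y = "conj_set n I X"
  have lift: "\<And>p. ?P (p - 1) \<Longrightarrow> ?Q p" using tau_subset_iff_lift[of n I X] n I X JX by auto
  obtain a k where A_eq: "A = {(a + int j) mod int n | j. j \<le> k}" and nPa: "\<not> ?P (a - 1)"
    and start: "\<And>j. j \<le> k \<Longrightarrow> run_start ?P (a + int j) = a"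
    and Jin: "\<And>j. 1 \<le> j \<Longrightarrow> j \<le> k \<Longrightarrow> ?P (a + int j - 1)"
    using tau_component_runE[OF A] by blast
  have memX: "(a + int j) mod int n \<in> X \<longleftrightarrow> ?Q (a + int j)" for j unfolding mem_mod_def by simp
  have I': "I \<subseteq> Sset n" and n0: "n > 0" using I n by auto
  have memJ: "(a + int j) mod int n \<in> tau n ` I \<longleftrightarrow> ?P (a + int j - 1)" for j
    using mem_mod_tau[OF I' n0, of "a + int j"] by (simp only: mem_mod_def[of n "tau n ` I"])
  have memI: "(a + int j) mod int n \<in> I \<longleftrightarrow> ?P (a + int j)" for j unfolding mem_mod_def by simp
  have memY: "(a + int j) mod int n \<in> ?Y \<longleftrightarrow> ?P (a + int j) \<or> ?Q a" if "j \<le> k" for j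
    using mem_mod_conj_set[OF n I, of X "a + int j"] by (simp only: mem_mod_def[of n ?Y] start[OF that])
  have Q_step: "?Q (a + int j)" if "1 \<le> j" "j \<le> k" for j
    using lift Jin[OF that] by blast
  have A_cases: "\<exists>j \<le> k. x = (a + int j) mod int n" if "x \<in> A" for x using that unfolding A_eq by blast
  show ?thesis
  proof (cases "?Q a")
    case True
    have "x \<in> X \<and> x \<in> ?Y" if xA: "x \<in> A" for x
    proof -
      obtain j where j: "j \<le> k" "x = (a + int j) mod int n" using A_cases[OF xA] by blast
      have "?Q (a + int j)" using True Q_step[of j] j by (cases "j = 0") auto
      then show ?thesis unfolding j(2) using True by (intro conjI memX[of j, THEN iffD2] memY[OF j(1), THEN iffD2]) auto
    qed
    then have "X \<inter> A = A \<and> ?Y \<inter> A = A" by blast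
    then show ?thesis by blast
  next
    case False
    have "(x \<in> X \<longleftrightarrow> x \<in> tau n ` I) \<and> (x \<in> ?Y \<longleftrightarrow> x \<in> I)" if xA: "x \<in> A" for x
    proof -
      obtain j where j: "j \<le> k" "x = (a + int j) mod int n" using A_cases[OF xA] by blast
      have "?Q (a + int j) \<longleftrightarrow> ?P (a + int j - 1)"
        using False nPa Q_step[of j] Jin[of j] j by (cases "j = 0") auto
      then show ?thesis unfolding j(2) memX memY[OF j(1)] memJ memI using False by simp
    qed
    then have "X \<inter> A = tau n ` I \<inter> A \<and> ?Y \<inter> A = I \<inter> A" by blast
    then show ?thesis by blast
  qed
qed

lemma conj_set_unique:
  assumes n: "n \<ge> 2" and I: "I \<subset> Sset n" and X: "X \<subset> Sset n" and JX: "tau n ` I \<subseteq> X"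
    and Y: "Y \<subset> Sset n" and eq: "longest n I \<circ> hX n X = hX n Y \<circ> longest n (tau n ` I)"
  shows "Y = conj_set n I X"
proof -
  let ?L = "longest n (tau n ` I)"
  have comp_eq: "hX n Y \<circ> ?L = hX n (conj_set n I X) \<circ> ?L"
    using eq longest_comp_hX_eq[OF n I X JX] by simp
  have "hX n Y p = hX n (conj_set n I X) p" for p
    using fun_cong[OF comp_eq, of "?L p"] longest_longest[OF n tau_image_proper[OF n I]] by simp
  then show ?thesis using hX_inj[OF n Y conj_set_proper[OF n I X JX]] by blast
qed

lemma ldes_hX_comp_longest:
  assumes n: "n \<ge> 2" and I: "I \<subset> Sset n" and X: "X \<subset> Sset n" and JX: "tau n ` I \<subseteq> X"
  defines "Y \<equiv> conj_set n I X"
  shows "ldes n (hX n Y \<circ> longest n (tau n ` I)) = I \<union> {y \<in> Y. (y + 1) mod int n \<notin> Y}"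
proof -
  let ?P = "mem_mod n I" and ?R = "mem_mod n Y" and ?J = "tau n ` I"
  have J: "?J \<subset> Sset n" by (rule tau_image_proper[OF n I])
  have Y: "Y \<subset> Sset n" unfolding Y_def by (rule conj_set_proper[OF n I X JX])
  have gP: "runs_bounded ?P" and gR: "runs_bounded ?R" using runs_bounded_proper[OF n] I Y by auto
  have R: "?R p \<longleftrightarrow> ?P p \<or> mem_mod n X (run_start ?P p)" for p
    unfolding Y_def by (rule mem_mod_conj_set[OF n I])
  have hY: "hX n Y = hmap ?R" using hX_eq_hmap[OF n] Y by blast
  have LI: "longest n I = run_rev ?P" using longest_eq_run_rev(1)[OF n] I by blast
  define g where "g p = longest n ?J (hmap_inv ?R p)" for p
  have "(hX n Y \<circ> longest n ?J) (g p) = p" for p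
    unfolding g_def comp_def hY longest_longest[OF n J] by (rule hmap_hmap_inv[OF gR])
  then have ld: "ldes n (hX n Y \<circ> longest n ?J) = {i \<in> Sset n. g (i+1) < g i}"
    by (rule ldes_in_W[OF n in_W_comp[OF in_W_hX[OF n Y] in_W_longest[OF n J]]])
  have "g (i+1) < g i \<longleftrightarrow> i \<in> I \<union> {y \<in> Y. (y + 1) mod int n \<notin> Y}" if iS: "i \<in> Sset n" for i
  proof -
    have "g (i+1) < g i \<longleftrightarrow> run_rev ?P (hmap_inv ?R (i+1) - 1) < run_rev ?P (hmap_inv ?R i - 1)"
      unfolding g_def longest_tau[OF n I] LI by linarith
    also have "\<dots> \<longleftrightarrow> ?P i \<or> (?R i \<and> \<not> ?R (i + 1))"
      by (rule run_rev_hmap_inv_descent_iff[OF gP gR R])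
    finally show ?thesis using mem_mod_Sset[OF iS] unfolding mem_mod_def[of n Y "i + 1"] by auto
  qed
  then show ?thesis unfolding ld using I Y by auto
qed

theorem lemma10p6:
  fixes n :: nat and I X :: "int set"
  assumes "n \<ge> 2"
    and "I \<subset> Sset n"
    and "X \<subset> Sset n"
  shows "(tau n ` I \<subseteq> X \<longleftrightarrow> tau n ` I \<subseteq> rdes n (longest n I \<circ> hX n X))
       \<and> (tau n ` I \<subseteq> X \<longrightarrow>
           len n (longest n I \<circ> hX n X) = len n (longest n I) + len n (hX n X)
         \<and> (\<exists>!Y. Y \<subset> Sset n \<and> longest n I \<circ> hX n X = hX n Y \<circ> longest n (tau n ` I))
         \<and> (\<forall>Y. Y \<subset> Sset n \<and> longest n I \<circ> hX n X = hX n Y \<circ> longest n (tau n ` I) \<longrightarrow>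
               (\<forall>A \<in> tau_components n I.
                   (X \<inter> A = tau n ` I \<inter> A \<and> Y \<inter> A = I \<inter> A)
                 \<or> (X \<inter> A = A \<and> Y \<inter> A = A))
             \<and> ldes n (hX n Y \<circ> longest n (tau n ` I))
                 = I \<union> {y \<in> Y. (y + 1) mod int n \<notin> Y})
         \<and> rdes n (longest n I \<circ> hX n X) = tau n ` I \<union> {x \<in> X. (x - 1) mod int n \<notin> X})"
proof -
  note n = assms(1) and I = assms(2) and X = assms(3)
  let ?J = "tau n ` I" and ?F = "longest n I \<circ> hX n X"
  show ?thesis
  proof (intro conjI impI)
    show "?J \<subseteq> X \<longleftrightarrow> ?J \<subseteq> rdes n ?F"
      using rdes_longest_comp_hX[OF n I X] tau_subset_if_tau_subset_rdes[OF n I X] by blast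
    show "len n ?F = len n (longest n I) + len n (hX n X)" if JX: "?J \<subseteq> X"
      by (rule len_longest_comp_hX[OF n I X JX])
    show "\<exists>!Y. Y \<subset> Sset n \<and> ?F = hX n Y \<circ> longest n ?J" if JX: "?J \<subseteq> X"
      using conj_set_proper[OF n I X JX] longest_comp_hX_eq[OF n I X JX] conj_set_unique[OF n I X JX]
      by blast
    show "\<forall>Y. Y \<subset> Sset n \<and> ?F = hX n Y \<circ> longest n ?J \<longrightarrow>
        (\<forall>A \<in> tau_components n I. (X \<inter> A = ?J \<inter> A \<and> Y \<inter> A = I \<inter> A) \<or> (X \<inter> A = A \<and> Y \<inter> A = A))
      \<and> ldes n (hX n Y \<circ> longest n ?J) = I \<union> {y \<in> Y. (y + 1) mod int n \<notin> Y}"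
      if JX: "?J \<subseteq> X"
    proof (intro allI impI)
      fix Y assume "Y \<subset> Sset n \<and> ?F = hX n Y \<circ> longest n ?J"
      then have "Y = conj_set n I X" using conj_set_unique[OF n I X JX] by blast
      then show "(\<forall>A \<in> tau_components n I. (X \<inter> A = ?J \<inter> A \<and> Y \<inter> A = I \<inter> A) \<or> (X \<inter> A = A \<and> Y \<inter> A = A))
        \<and> ldes n (hX n Y \<circ> longest n ?J) = I \<union> {y \<in> Y. (y + 1) mod int n \<notin> Y}"
        using conj_set_tau_component[OF n I X JX] ldes_hX_comp_longest[OF n I X JX] by simp
    qed
    show "rdes n ?F = ?J \<union> {x \<in> X. (x - 1) mod int n \<notin> X}" if JX: "?J \<subseteq> X"
      by (rule rdes_longest_comp_hX[OF n I X JX])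
  qed
qed

end
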